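(* Assume $\mathcal M$ satisfies extensibility. Let $\lambda^*\in\mathbb R^A$ with $\lambda^*>0$ and $p^*\in\mathbb R^G_{\ge0}$ be such that $(\lambda^*,p^* )$ is proper. Then there exists an optimal solution $X^*$ of $LP(\lambda^* )$ such that $\mathrm{pay}_i(X^*,p^* )=m_i$ for every $i\in A$.
   Context: A market $\mathcal M$: finite agent set $A$, finite goods set $G$ (supply $1$ each), finite index set $C$; agent $i$ has real coefficients $a_{ijk}$, requirements $r_{ik}\ge0$, delays $d_{ij}\ge0$, budget $m_i>0$; $m(S)=\sum_{i\in S}m_i$. CC$(i)$: $\sum_ja_{ijk}x_{ij}\ge r_{ik}$ for all $k$, $x_{ij}\ge0$. An allocation $X\ge0$ is supply respecting if $\sum_ix_{ij}\le1$ for all $j$. For $S\subseteq A$, $X$ is jointly optimal for $S$ if it satisfies CC$(i)$ for all $i\in S$, is supply respecting, and minimizes $\sum_{i\in S}\sum_jd_{ij}x_{ij}$ among such allocations. Extensibility: for every $S\subset A$, every $X$ jointly optimal for $S$ and every $i\in A\setminus S$, there is $X'$ jointly optimal for $S\cup\{i\}$ with $\sum_jd_{i'j}x'_{i'j}=\sum_jd_{i'j}x_{i'j}$ for all $i'\in S$. $LP(\lambda)$: minimize $\sum_i\lambda_i\sum_jd_{ij}x_{ij}$ s.t. $\sum_ja_{ijk}x_{ij}\ge r_{ik}$ for all $(i,k)$, $\sum_ix_{ij}\le1$ for all $j$, $x\ge0$. $DLP(\lambda)$: maximize $\sum_{i,k}r_{ik}\alpha_{ik}-\sum_jp_j$ s.t.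 $\lambda_id_{ij}\ge\sum_ka_{ijk}\alpha_{ik}-p_j$ for all $(i,j)$, $\alpha,p\ge0$. $\mathrm{delay}_S(X)=\sum_{i\in S}\sum_jd_{ij}x_{ij}$, $\mathrm{pay}_S(X,p)=\sum_{i\in S}\sum_jp_jx_{ij}$, $\mathrm{pay}_i=\mathrm{pay}_{\{i\}}$. Given $(\lambda,p)$ and $S\subseteq A$: condition BB holds for $S$ if $\mathrm{pay}_S(X,p)=m(S)$ for every optimal solution $X$ of $LP(\lambda)$; condition SC holds for $S$ if for every $T\subseteq S$, letting $X$ be an optimal solution of $LP(\lambda)$ that maximizes $\mathrm{delay}_T$ among optimal solutions, $m(T)\ge\mathrm{pay}_T(X,p)$. The pair $(\lambda,p)$ is proper if there is $\alpha$ with $(\alpha,p)$ optimal for $DLP(\lambda)$, and BB and SC hold for every class $S_g$ of the partition of $A$ by equality of $\lambda_i$. *)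

theory Defs
  imports Complex_Main
begin

text \<open>Allocations are functions X :: agent => good => real (only values on A x G matter).\<close>

definition nonneg_alloc :: "'a set \<Rightarrow> 'g set \<Rightarrow> ('a \<Rightarrow> 'g \<Rightarrow> real) \<Rightarrow> bool" where
  "nonneg_alloc A G X \<longleftrightarrow> (\<forall>i\<in>A. \<forall>j\<in>G. X i j \<ge> 0)"

definition CC :: "'g set \<Rightarrow> 'c set \<Rightarrow> ('a \<Rightarrow> 'g \<Rightarrow> 'c \<Rightarrow> real) \<Rightarrow> ('a \<Rightarrow> 'c \<Rightarrow> real)
    \<Rightarrow> ('a \<Rightarrow> 'g \<Rightarrow> real) \<Rightarrow> 'a \<Rightarrow> bool" where
  "CC G C a r X i \<longleftrightarrow> (\<forall>k\<in>C. (\<Sum>j\<in>G. a i j k * X i j) \<ge> r i k) \<and> (\<forall>j\<in>G. X i j \<ge> 0)"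

definition supply_respecting :: "'a set \<Rightarrow> 'g set \<Rightarrow> ('a \<Rightarrow> 'g \<Rightarrow> real) \<Rightarrow> bool" where
  "supply_respecting A G X \<longleftrightarrow> (\<forall>j\<in>G. (\<Sum>i\<in>A. X i j) \<le> 1)"

definition delay :: "'g set \<Rightarrow> ('a \<Rightarrow> 'g \<Rightarrow> real) \<Rightarrow> 'a set \<Rightarrow> ('a \<Rightarrow> 'g \<Rightarrow> real) \<Rightarrow> real" where
  "delay G d S X = (\<Sum>i\<in>S. \<Sum>j\<in>G. d i j * X i j)"

definition pay :: "'g set \<Rightarrow> 'a set \<Rightarrow> ('a \<Rightarrow> 'g \<Rightarrow> real) \<Rightarrow> ('g \<Rightarrow> real) \<Rightarrow> real" where
  "pay G S X p = (\<Sum>i\<in>S. \<Sum>j\<in>G. p j * X i j)"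

definition admissible_for :: "'a set \<Rightarrow> 'g set \<Rightarrow> 'c set \<Rightarrow> ('a \<Rightarrow> 'g \<Rightarrow> 'c \<Rightarrow> real)
    \<Rightarrow> ('a \<Rightarrow> 'c \<Rightarrow> real) \<Rightarrow> 'a set \<Rightarrow> ('a \<Rightarrow> 'g \<Rightarrow> real) \<Rightarrow> bool" where
  "admissible_for A G C a r S X \<longleftrightarrow>
     nonneg_alloc A G X \<and> (\<forall>i\<in>S. CC G C a r X i) \<and> supply_respecting A G X"

definition jointly_optimal :: "'a set \<Rightarrow> 'g set \<Rightarrow> 'c set \<Rightarrow> ('a \<Rightarrow> 'g \<Rightarrow> 'c \<Rightarrow> real)
    \<Rightarrow> ('a \<Rightarrow> 'c \<Rightarrow> real) \<Rightarrow> ('a \<Rightarrow> 'g \<Rightarrow> real) \<Rightarrow> 'a set \<Rightarrow> ('a \<Rightarrow> 'g \<Rightarrow> real) \<Rightarrow> bool" where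
  "jointly_optimal A G C a r d S X \<longleftrightarrow>
     admissible_for A G C a r S X \<and>
     (\<forall>Y. admissible_for A G C a r S Y \<longrightarrow> delay G d S X \<le> delay G d S Y)"

definition extensible :: "'a set \<Rightarrow> 'g set \<Rightarrow> 'c set \<Rightarrow> ('a \<Rightarrow> 'g \<Rightarrow> 'c \<Rightarrow> real)
    \<Rightarrow> ('a \<Rightarrow> 'c \<Rightarrow> real) \<Rightarrow> ('a \<Rightarrow> 'g \<Rightarrow> real) \<Rightarrow> bool" where
  "extensible A G C a r d \<longleftrightarrow>
     (\<forall>S X i. S \<subset> A \<longrightarrow> jointly_optimal A G C a r d S X \<longrightarrow> i \<in> A - S \<longrightarrow>
        (\<exists>X'. jointly_optimal A G C a r d (insert i S) X' \<and>
              (\<forall>i'\<in>S. delay G d {i'} X' = delay G d {i'} X)))"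

definition LP_obj :: "'a set \<Rightarrow> 'g set \<Rightarrow> ('a \<Rightarrow> 'g \<Rightarrow> real) \<Rightarrow> ('a \<Rightarrow> real)
    \<Rightarrow> ('a \<Rightarrow> 'g \<Rightarrow> real) \<Rightarrow> real" where
  "LP_obj A G d lam X = (\<Sum>i\<in>A. lam i * (\<Sum>j\<in>G. d i j * X i j))"

definition LP_optimal :: "'a set \<Rightarrow> 'g set \<Rightarrow> 'c set \<Rightarrow> ('a \<Rightarrow> 'g \<Rightarrow> 'c \<Rightarrow> real)
    \<Rightarrow> ('a \<Rightarrow> 'c \<Rightarrow> real) \<Rightarrow> ('a \<Rightarrow> 'g \<Rightarrow> real) \<Rightarrow> ('a \<Rightarrow> real) \<Rightarrow> ('a \<Rightarrow> 'g \<Rightarrow> real) \<Rightarrow> bool" where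
  "LP_optimal A G C a r d lam X \<longleftrightarrow>
     admissible_for A G C a r A X \<and>
     (\<forall>Y. admissible_for A G C a r A Y \<longrightarrow> LP_obj A G d lam X \<le> LP_obj A G d lam Y)"

definition DLP_feasible :: "'a set \<Rightarrow> 'g set \<Rightarrow> 'c set \<Rightarrow> ('a \<Rightarrow> 'g \<Rightarrow> 'c \<Rightarrow> real)
    \<Rightarrow> ('a \<Rightarrow> 'g \<Rightarrow> real) \<Rightarrow> ('a \<Rightarrow> real) \<Rightarrow> ('a \<Rightarrow> 'c \<Rightarrow> real) \<Rightarrow> ('g \<Rightarrow> real) \<Rightarrow> bool" where
  "DLP_feasible A G C a d lam \<alpha> p \<longleftrightarrow>
     (\<forall>i\<in>A. \<forall>j\<in>G. lam i * d i j \<ge> (\<Sum>k\<in>C. a i j k * \<alpha> i k) - p j) \<and>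
     (\<forall>i\<in>A. \<forall>k\<in>C. \<alpha> i k \<ge> 0) \<and> (\<forall>j\<in>G. p j \<ge> 0)"

definition DLP_obj :: "'a set \<Rightarrow> 'g set \<Rightarrow> 'c set \<Rightarrow> ('a \<Rightarrow> 'c \<Rightarrow> real)
    \<Rightarrow> ('a \<Rightarrow> 'c \<Rightarrow> real) \<Rightarrow> ('g \<Rightarrow> real) \<Rightarrow> real" where
  "DLP_obj A G C r \<alpha> p = (\<Sum>i\<in>A. \<Sum>k\<in>C. r i k * \<alpha> i k) - (\<Sum>j\<in>G. p j)"

definition DLP_optimal :: "'a set \<Rightarrow> 'g set \<Rightarrow> 'c set \<Rightarrow> ('a \<Rightarrow> 'g \<Rightarrow> 'c \<Rightarrow> real)
    \<Rightarrow> ('a \<Rightarrow> 'c \<Rightarrow> real) \<Rightarrow> ('a \<Rightarrow> 'g \<Rightarrow> real) \<Rightarrow> ('a \<Rightarrow> real)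
    \<Rightarrow> ('a \<Rightarrow> 'c \<Rightarrow> real) \<Rightarrow> ('g \<Rightarrow> real) \<Rightarrow> bool" where
  "DLP_optimal A G C a r d lam \<alpha> p \<longleftrightarrow>
     DLP_feasible A G C a d lam \<alpha> p \<and>
     (\<forall>\<beta> q. DLP_feasible A G C a d lam \<beta> q \<longrightarrow> DLP_obj A G C r \<beta> q \<le> DLP_obj A G C r \<alpha> p)"

definition budget :: "('a \<Rightarrow> real) \<Rightarrow> 'a set \<Rightarrow> real" where
  "budget m S = (\<Sum>i\<in>S. m i)"

definition cond_BB :: "'a set \<Rightarrow> 'g set \<Rightarrow> 'c set \<Rightarrow> ('a \<Rightarrow> 'g \<Rightarrow> 'c \<Rightarrow> real)
    \<Rightarrow> ('a \<Rightarrow> 'c \<Rightarrow> real) \<Rightarrow> ('a \<Rightarrow> 'g \<Rightarrow> real) \<Rightarrow> ('a \<Rightarrow> real)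
    \<Rightarrow> ('a \<Rightarrow> real) \<Rightarrow> ('g \<Rightarrow> real) \<Rightarrow> 'a set \<Rightarrow> bool" where
  "cond_BB A G C a r d m lam p S \<longleftrightarrow>
     (\<forall>X. LP_optimal A G C a r d lam X \<longrightarrow> pay G S X p = budget m S)"

definition cond_SC :: "'a set \<Rightarrow> 'g set \<Rightarrow> 'c set \<Rightarrow> ('a \<Rightarrow> 'g \<Rightarrow> 'c \<Rightarrow> real)
    \<Rightarrow> ('a \<Rightarrow> 'c \<Rightarrow> real) \<Rightarrow> ('a \<Rightarrow> 'g \<Rightarrow> real) \<Rightarrow> ('a \<Rightarrow> real)
    \<Rightarrow> ('a \<Rightarrow> real) \<Rightarrow> ('g \<Rightarrow> real) \<Rightarrow> 'a set \<Rightarrow> bool" where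
  "cond_SC A G C a r d m lam p S \<longleftrightarrow>
     (\<forall>T X. T \<subseteq> S \<longrightarrow> LP_optimal A G C a r d lam X \<longrightarrow>
        (\<forall>Y. LP_optimal A G C a r d lam Y \<longrightarrow> delay G d T Y \<le> delay G d T X) \<longrightarrow>
        budget m T \<ge> pay G T X p)"

definition lam_class :: "'a set \<Rightarrow> ('a \<Rightarrow> real) \<Rightarrow> 'a \<Rightarrow> 'a set" where
  "lam_class A lam i0 = {i\<in>A. lam i = lam i0}"

definition proper :: "'a set \<Rightarrow> 'g set \<Rightarrow> 'c set \<Rightarrow> ('a \<Rightarrow> 'g \<Rightarrow> 'c \<Rightarrow> real)
    \<Rightarrow> ('a \<Rightarrow> 'c \<Rightarrow> real) \<Rightarrow> ('a \<Rightarrow> 'g \<Rightarrow> real) \<Rightarrow> ('a \<Rightarrow> real)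
    \<Rightarrow> ('a \<Rightarrow> real) \<Rightarrow> ('g \<Rightarrow> real) \<Rightarrow> bool" where
  "proper A G C a r d m lam p \<longleftrightarrow>
     (\<exists>\<alpha>. DLP_optimal A G C a r d lam \<alpha> p) \<and>
     (\<forall>i0\<in>A. cond_BB A G C a r d m lam p (lam_class A lam i0) \<and>
              cond_SC A G C a r d m lam p (lam_class A lam i0))"

end

theory Submission
  imports Defs "HOL-Library.Product_Lexorder"
begin

text \<open>For a dual optimum \<open>(\<alpha>, p)\<close>, complementary slackness makes every optimal allocation \<open>X\<close> pay
  \<open>\<Sum>\<^sub>k \<alpha>\<^sub>i\<^sub>k r\<^sub>i\<^sub>k - \<lambda>\<^sub>i delay\<^sub>i(X)\<close>, so the claim is that some optimum has the delay vector
  \<open>D\<^sub>i = (\<Sum>\<^sub>k \<alpha>\<^sub>i\<^sub>k r\<^sub>i\<^sub>k - m\<^sub>i) / \<lambda>\<^sub>i\<close>. The optima form a polyhedron; if none hits \<open>D\<close>, Farkas' lemma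
  (via Fourier--Motzkin elimination) yields weights \<open>w\<close> with \<open>w\<cdot>D < w\<cdot>delay(X)\<close> for all
  optima \<open>X\<close>. Against this, order the agents by decreasing \<open>\<lambda>\<close>, ties by decreasing \<open>w\<close>, and use
  extensibility to build one allocation \<open>g\<close> jointly optimal for every initial segment. Then \<open>g\<close> is
  optimal, and within each class of equal \<open>\<lambda>\<close> condition BB fixes the total delay while SC, applied to
  an optimum maximising the delay of the agents with small \<open>w\<close>, bounds the delay of \<open>g\<close> on every
  upper \<open>w\<close>-segment by the target; Abel summation gives \<open>w\<cdot>delay(g) \<le> w\<cdot>D\<close>.\<close>

section \<open>Farkas' lemma by Fourier--Motzkin elimination\<close>

definition ineq_polyhedron :: "'r set \<Rightarrow> 'v set \<Rightarrow> ('r \<Rightarrow> 'v \<Rightarrow> real) \<Rightarrow> ('r \<Rightarrow> real) \<Rightarrow> ('v \<Rightarrow> real) set" where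
  "ineq_polyhedron I V M b = {x. \<forall>i\<in>I. (\<Sum>v\<in>V. M i v * x v) \<le> b i}"

definition farkas_certificate :: "'r set \<Rightarrow> 'v set \<Rightarrow> ('r \<Rightarrow> 'v \<Rightarrow> real) \<Rightarrow> ('r \<Rightarrow> real) \<Rightarrow> ('r \<Rightarrow> real) \<Rightarrow> bool" where
  "farkas_certificate I V M b y \<longleftrightarrow>
     (\<forall>i\<in>I. 0 \<le> y i) \<and> (\<forall>v\<in>V. (\<Sum>i\<in>I. y i * M i v) = 0) \<and> (\<Sum>i\<in>I. y i * b i) < 0"

lemma sum_weighted_rows:
  fixes y :: "'r \<Rightarrow> real"
  shows "(\<Sum>i\<in>I. y i * (\<Sum>v\<in>V. M i v * x v)) = (\<Sum>v\<in>V. (\<Sum>i\<in>I. y i * M i v) * x v)"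
  by (simp add: sum_distrib_left sum_distrib_right mult.assoc, subst sum.swap, simp)

lemma fourier_motzkin_bound:
  fixes s b c :: "'i \<Rightarrow> real"
  assumes fin: "finite Ip" "finite In"
    and pos: "\<forall>i\<in>Ip. c i > 0" and neg: "\<forall>j\<in>In. c j < 0"
    and pair: "\<forall>i\<in>Ip. \<forall>j\<in>In. (- c j) * s i + c i * s j \<le> (- c j) * b i + c i * b j"
  shows "\<exists>t. \<forall>i\<in>Ip \<union> In. c i * t + s i \<le> b i"
proof -
  define u where "u i = (b i - s i) / c i" for i
  have lower_le_upper: "u j \<le> u i" if "i \<in> Ip" "j \<in> In" for i j
  proof -
    have ci: "c i > 0" and cj: "c j < 0" using pos neg that by auto
    have "c i * (b j - s j) \<ge> c j * (b i - s i)"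
      using pair that by (simp add: algebra_simps)
    hence "(b j - s j) / c j \<le> (b i - s i) / c i"
      using ci cj by (simp add: field_simps)
    thus ?thesis by (simp add: u_def)
  qed
  define t where "t = (if Ip = {} then (if In = {} then 0 else Max (u ` In)) else Min (u ` Ip))"
  have upper: "t \<le> u i" if "i \<in> Ip" for i
    using that fin by (auto simp: t_def)
  have lower: "u j \<le> t" if "j \<in> In" for j
  proof (cases "Ip = {}")
    case True thus ?thesis using that fin by (auto simp: t_def)
  next
    case False
    then obtain i where "i \<in> Ip" "t = u i"
      using fin by (metis (no_types, lifting) Min_in finite_imageI image_iff image_is_empty t_def)
    thus ?thesis using lower_le_upper that by auto
  qed
  have "c i * t + s i \<le> b i" if "i \<in> Ip \<union> In" for i
  proof (cases "i \<in> Ip")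
    case True
    hence "c i * t \<le> c i * u i" using upper pos by (simp add: mult_left_mono)
    thus ?thesis using pos True by (auto simp: u_def)
  next
    case False
    hence "i \<in> In" using that by simp
    hence "c i * t \<le> c i * u i" using lower neg by (simp add: mult_left_mono_neg)
    thus ?thesis using neg \<open>i \<in> In\<close> by (auto simp: u_def)
  qed
  thus ?thesis by blast
qed

text \<open>Row indices of the systems produced by eliminating variables: \<open>Keep i\<close> is a row not involving
  the eliminated variable, \<open>Comb i j\<close> the combination of a row with positive and one with negative
  coefficient that cancels it. A single index type thus serves for all elimination steps.\<close>

datatype 'r fm_row = Orig 'r | Keep "'r fm_row" | Comb "'r fm_row" "'r fm_row"

definition fm_rows :: "('r fm_row \<Rightarrow> 'v \<Rightarrow> real) \<Rightarrow> 'v \<Rightarrow> 'r fm_row set \<Rightarrow> 'r fm_row set" where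
  "fm_rows M v0 I = Keep ` {i\<in>I. M i v0 = 0} \<union>
     (\<lambda>(i, j). Comb i j) ` ({i\<in>I. 0 < M i v0} \<times> {j\<in>I. M j v0 < 0})"

definition fm_comb :: "('r fm_row \<Rightarrow> 'v \<Rightarrow> real) \<Rightarrow> 'v \<Rightarrow> ('r fm_row \<Rightarrow> real) \<Rightarrow> 'r fm_row \<Rightarrow> real" where
  "fm_comb M v0 F k =
     (case k of Keep i \<Rightarrow> F i | Comb i j \<Rightarrow> (- M j v0) * F i + M i v0 * F j | Orig _ \<Rightarrow> 0)"

definition fm_pullback :: "('r fm_row \<Rightarrow> 'v \<Rightarrow> real) \<Rightarrow> 'v \<Rightarrow> 'r fm_row set
    \<Rightarrow> ('r fm_row \<Rightarrow> real) \<Rightarrow> 'r fm_row \<Rightarrow> real" where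
  "fm_pullback M v0 I y' i =
     (if M i v0 = 0 then y' (Keep i)
      else if 0 < M i v0 then (\<Sum>j\<in>{j\<in>I. M j v0 < 0}. y' (Comb i j) * (- M j v0))
      else (\<Sum>i'\<in>{i'\<in>I. 0 < M i' v0}. y' (Comb i' i) * M i' v0))"

lemma fm_comb_simps [simp]:
  "fm_comb M v0 F (Keep i) = F i"
  "fm_comb M v0 F (Comb i j) = (- M j v0) * F i + M i v0 * F j"
  by (simp_all add: fm_comb_def)

lemma fm_rows_memI:
  "i \<in> I \<Longrightarrow> M i v0 = 0 \<Longrightarrow> Keep i \<in> fm_rows M v0 I"
  "i \<in> I \<Longrightarrow> j \<in> I \<Longrightarrow> 0 < M i v0 \<Longrightarrow> M j v0 < 0 \<Longrightarrow> Comb i j \<in> fm_rows M v0 I"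
  by (auto simp: fm_rows_def)

lemma finite_fm_rows: "finite I \<Longrightarrow> finite (fm_rows M v0 I)"
  by (simp add: fm_rows_def)

lemma sum_fm_pullback:
  assumes fin: "finite I"
  shows "(\<Sum>i\<in>I. fm_pullback M v0 I y' i * F i) = (\<Sum>k\<in>fm_rows M v0 I. y' k * fm_comb M v0 F k)"
proof -
  define I0 where "I0 = {i\<in>I. M i v0 = 0}"
  define Ip where "Ip = {i\<in>I. 0 < M i v0}"
  define In where "In = {i\<in>I. M i v0 < 0}"
  have fin': "finite I0" "finite Ip" "finite In" using fin by (auto simp: I0_def Ip_def In_def)
  have "(\<Sum>k\<in>fm_rows M v0 I. y' k * fm_comb M v0 F k)
      = (\<Sum>k\<in>Keep ` I0. y' k * fm_comb M v0 F k)
        + (\<Sum>k\<in>(\<lambda>(i, j). Comb i j) ` (Ip \<times> In). y' k * fm_comb M v0 F k)"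
    unfolding fm_rows_def I0_def[symmetric] Ip_def[symmetric] In_def[symmetric]
    by (rule sum.union_disjoint) (use fin' in auto)
  also have "(\<Sum>k\<in>Keep ` I0. y' k * fm_comb M v0 F k) = (\<Sum>i\<in>I0. y' (Keep i) * F i)"
    by (subst sum.reindex) (auto simp: inj_on_def)
  also have "(\<Sum>k\<in>(\<lambda>(i, j). Comb i j) ` (Ip \<times> In). y' k * fm_comb M v0 F k)
      = (\<Sum>(i, j)\<in>Ip \<times> In. y' (Comb i j) * (- M j v0) * F i)
        + (\<Sum>(i, j)\<in>Ip \<times> In. y' (Comb i j) * M i v0 * F j)"
    by (subst sum.reindex) (auto simp: inj_on_def sum.distrib[symmetric] algebra_simps intro!: sum.cong)
  also have "(\<Sum>(i, j)\<in>Ip \<times> In. y' (Comb i j) * (- M j v0) * F i)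
      = (\<Sum>i\<in>Ip. (\<Sum>j\<in>In. y' (Comb i j) * (- M j v0)) * F i)"
    by (simp add: sum.cartesian_product[symmetric] sum_distrib_right)
  also have "(\<Sum>(i, j)\<in>Ip \<times> In. y' (Comb i j) * M i v0 * F j)
      = (\<Sum>j\<in>In. (\<Sum>i\<in>Ip. y' (Comb i j) * M i v0) * F j)"
    by (simp add: sum.cartesian_product[symmetric] sum_distrib_right, subst sum.swap, simp)
  also have "(\<Sum>i\<in>I0. y' (Keep i) * F i) = (\<Sum>i\<in>I0. fm_pullback M v0 I y' i * F i)"
    by (rule sum.cong) (auto simp: I0_def fm_pullback_def)
  also have "(\<Sum>i\<in>Ip. (\<Sum>j\<in>In. y' (Comb i j) * (- M j v0)) * F i)
      = (\<Sum>i\<in>Ip. fm_pullback M v0 I y' i * F i)"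
    by (rule sum.cong) (auto simp: Ip_def In_def fm_pullback_def)
  also have "(\<Sum>j\<in>In. (\<Sum>i\<in>Ip. y' (Comb i j) * M i v0) * F j)
      = (\<Sum>i\<in>In. fm_pullback M v0 I y' i * F i)"
    by (rule sum.cong) (auto simp: Ip_def In_def fm_pullback_def)
  also have "(\<Sum>i\<in>I0. fm_pullback M v0 I y' i * F i) + ((\<Sum>i\<in>Ip. fm_pullback M v0 I y' i * F i)
        + (\<Sum>i\<in>In. fm_pullback M v0 I y' i * F i))
      = (\<Sum>i\<in>I0 \<union> (Ip \<union> In). fm_pullback M v0 I y' i * F i)"
    using fin' by (simp add: sum.union_disjoint disjoint_iff I0_def Ip_def In_def)
  also have "I0 \<union> (Ip \<union> In) = I" by (auto simp: I0_def Ip_def In_def)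
  finally show ?thesis ..
qed

lemma fm_elim_infeasible:
  assumes fin: "finite I" "finite V" and v0: "v0 \<notin> V"
    and empty: "ineq_polyhedron I (insert v0 V) M b = {}"
  shows "ineq_polyhedron (fm_rows M v0 I) V (\<lambda>k v. fm_comb M v0 (\<lambda>i. M i v) k) (fm_comb M v0 b) = {}"
proof (rule ccontr)
  assume "\<not> ?thesis"
  then obtain x where x: "\<forall>k\<in>fm_rows M v0 I. (\<Sum>v\<in>V. fm_comb M v0 (\<lambda>i. M i v) k * x v) \<le> fm_comb M v0 b k"
    by (auto simp: ineq_polyhedron_def)
  define s where "s i = (\<Sum>v\<in>V. M i v * x v)" for i
  have comb: "(\<Sum>v\<in>V. fm_comb M v0 (\<lambda>i. M i v) (Comb i j) * x v) = (- M j v0) * s i + M i v0 * s j" for i j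
    by (simp add: s_def sum_distrib_left sum.distrib[symmetric] algebra_simps)
  have keep: "s i \<le> b i" if "i \<in> I" "M i v0 = 0" for i
    using x fm_rows_memI(1)[of i I M v0] that by (fastforce simp: s_def)
  obtain t where t: "\<forall>i\<in>{i\<in>I. 0 < M i v0} \<union> {i\<in>I. M i v0 < 0}. M i v0 * t + s i \<le> b i"
  proof (rule fourier_motzkin_bound[THEN exE])
    show "\<forall>i\<in>{i\<in>I. 0 < M i v0}. \<forall>j\<in>{j\<in>I. M j v0 < 0}.
        (- M j v0) * s i + M i v0 * s j \<le> (- M j v0) * b i + M i v0 * b j"
    proof (intro ballI)
      fix i j assume "i \<in> {i\<in>I. 0 < M i v0}" "j \<in> {j\<in>I. M j v0 < 0}"
      hence "Comb i j \<in> fm_rows M v0 I" by (auto intro: fm_rows_memI)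
      thus "(- M j v0) * s i + M i v0 * s j \<le> (- M j v0) * b i + M i v0 * b j"
        using x comb by fastforce
    qed
  qed (use fin in auto)
  have val: "(\<Sum>v\<in>insert v0 V. M i v * (x(v0 := t)) v) = M i v0 * t + s i" for i
  proof -
    have "(\<Sum>v\<in>V. M i v * (x(v0 := t)) v) = s i"
      unfolding s_def using v0 by (intro sum.cong) auto
    thus ?thesis using fin v0 by (simp add: sum.insert_remove)
  qed
  have "M i v0 * t + s i \<le> b i" if "i \<in> I" for i
    using keep[OF that] t that by (cases "M i v0 = 0") (auto simp: neq_iff)
  hence "x(v0 := t) \<in> ineq_polyhedron I (insert v0 V) M b"
    by (simp add: ineq_polyhedron_def val del: fun_upd_apply)
  thus False using empty by blast
qed

lemma fm_certificate_pullback: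
  assumes fin: "finite I"
    and cert: "farkas_certificate (fm_rows M v0 I) V (\<lambda>k v. fm_comb M v0 (\<lambda>i. M i v) k) (fm_comb M v0 b) y'"
  shows "farkas_certificate I (insert v0 V) M b (fm_pullback M v0 I y')"
proof -
  have y'_nonneg: "0 \<le> y' k" if "k \<in> fm_rows M v0 I" for k
    using cert that by (simp add: farkas_certificate_def)
  have "0 \<le> fm_pullback M v0 I y' i" if "i \<in> I" for i
    using that y'_nonneg[OF fm_rows_memI(1)] y'_nonneg[OF fm_rows_memI(2)]
    by (auto simp: fm_pullback_def mult_nonneg_nonpos intro!: sum_nonneg mult_nonneg_nonneg)
  moreover have "(\<Sum>i\<in>I. fm_pullback M v0 I y' i * M i v) = 0" if "v \<in> insert v0 V" for v
  proof (cases "v = v0")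
    case True
    have "(\<Sum>k\<in>fm_rows M v0 I. y' k * fm_comb M v0 (\<lambda>i. M i v0) k) = 0"
      by (rule sum.neutral) (auto simp: fm_rows_def)
    thus ?thesis using sum_fm_pullback[OF fin, of M v0 y' "\<lambda>i. M i v0"] True by simp
  next
    case False
    thus ?thesis using that cert sum_fm_pullback[OF fin, of M v0 y' "\<lambda>i. M i v"]
      by (simp add: farkas_certificate_def)
  qed
  moreover have "(\<Sum>i\<in>I. fm_pullback M v0 I y' i * b i) < 0"
    using cert sum_fm_pullback[OF fin, of M v0 y' b] by (simp add: farkas_certificate_def)
  ultimately show ?thesis by (simp add: farkas_certificate_def)
qed

lemma farkas_fm_row:
  fixes M :: "'r fm_row \<Rightarrow> 'v \<Rightarrow> real"
  assumes "finite V" "finite I" "ineq_polyhedron I V M b = {}"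
  shows "\<exists>y. farkas_certificate I V M b y"
  using assms
proof (induction V arbitrary: I M b rule: finite_induct)
  case empty
  have "\<not> (\<forall>i\<in>I. 0 \<le> b i)"
    using empty.prems(2) unfolding ineq_polyhedron_def by (auto split: if_splits)
  then obtain i0 where i0: "i0 \<in> I" "b i0 < 0" by (auto simp: not_le)
  have "farkas_certificate I {} M b (\<lambda>i. if i = i0 then 1 else 0)"
    using empty.prems i0 by (simp add: farkas_certificate_def if_distrib[of "\<lambda>z. z * _"] cong: if_cong)
  thus ?case by blast
next
  case (insert v0 V)
  obtain y' where "farkas_certificate (fm_rows M v0 I) V
      (\<lambda>k v. fm_comb M v0 (\<lambda>i. M i v) k) (fm_comb M v0 b) y'"
    using insert.IH[OF finite_fm_rows fm_elim_infeasible] insert.hyps insert.prems by blast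
  hence "farkas_certificate I (insert v0 V) M b (fm_pullback M v0 I y')"
    by (rule fm_certificate_pullback[OF insert.prems(1)])
  thus ?case by blast
qed

theorem farkas:
  fixes M :: "'r \<Rightarrow> 'v \<Rightarrow> real"
  assumes fin: "finite I" "finite V" and empty: "ineq_polyhedron I V M b = {}"
  shows "\<exists>y. farkas_certificate I V M b y"
proof -
  define M' where "M' k = (case k of Orig i \<Rightarrow> M i | _ \<Rightarrow> (\<lambda>_. 0))" for k
  define b' where "b' k = (case k of Orig i \<Rightarrow> b i | _ \<Rightarrow> 0)" for k
  have inj: "inj_on Orig I" by (simp add: inj_on_def)
  have "ineq_polyhedron (Orig ` I) V M' b' = {}"
    using empty by (simp add: ineq_polyhedron_def M'_def b'_def)
  then obtain y' where "farkas_certificate (Orig ` I) V M' b' y'"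
    using farkas_fm_row fin by blast
  hence "farkas_certificate I V M b (y' \<circ> Orig)"
    by (simp add: farkas_certificate_def sum.reindex[OF inj] M'_def b'_def)
  thus ?thesis by blast
qed

lemma ball_Plus_iff: "(\<forall>i\<in>I <+> J. P i) \<longleftrightarrow> (\<forall>i\<in>I. P (Inl i)) \<and> (\<forall>j\<in>J. P (Inr j))"
  by (simp add: Plus_def ball_Un Ball_image_comp comp_def)

lemma ineq_polyhedron_Plus:
  "ineq_polyhedron (I <+> J) V (case_sum M N) (case_sum b e)
     = ineq_polyhedron I V M b \<inter> ineq_polyhedron J V N e"
  by (auto simp: ineq_polyhedron_def ball_Plus_iff)

lemma farkas_certificate_sum:
  assumes "farkas_certificate I V M b y" and "finite I"
  shows "(\<Sum>i\<in>I. y i * (\<Sum>v\<in>V. M i v * x v)) = 0"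
  using assms by (simp add: sum_weighted_rows farkas_certificate_def)

lemma farkas_objective_bound:
  fixes M :: "'r \<Rightarrow> 'v \<Rightarrow> real" and c :: "'v \<Rightarrow> real"
  assumes fin: "finite I" "finite V"
    and above: "\<forall>x\<in>ineq_polyhedron I V M b. \<beta> < (\<Sum>v\<in>V. c v * x v)"
  shows "\<exists>y t. (\<forall>i\<in>I. 0 \<le> y i) \<and> 0 \<le> t \<and> (\<forall>v\<in>V. (\<Sum>i\<in>I. y i * M i v) + t * c v = 0) \<and>
    (\<Sum>i\<in>I. y i * b i) + t * \<beta> < 0"
proof -
  define M' :: "'r + unit \<Rightarrow> 'v \<Rightarrow> real" where "M' = case_sum M (\<lambda>_. c)"
  define b' :: "'r + unit \<Rightarrow> real" where "b' = case_sum b (\<lambda>_. \<beta>)"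
  have "ineq_polyhedron (I <+> {()}) V M' b' = {}"
    using above unfolding M'_def b'_def ineq_polyhedron_Plus
    by (auto simp: ineq_polyhedron_def not_le[symmetric])
  then obtain y where "farkas_certificate (I <+> {()}) V M' b' y"
    using farkas[of "I <+> {()}" V M' b'] fin by auto
  hence "(\<forall>i\<in>I. 0 \<le> y (Inl i)) \<and> 0 \<le> y (Inr ()) \<and>
      (\<forall>v\<in>V. (\<Sum>i\<in>I. y (Inl i) * M i v) + y (Inr ()) * c v = 0) \<and>
      (\<Sum>i\<in>I. y (Inl i) * b i) + y (Inr ()) * \<beta> < 0"
    using fin by (simp add: farkas_certificate_def ball_Plus_iff sum.Plus M'_def b'_def)
  thus ?thesis by (intro exI[of _ "\<lambda>i. y (Inl i)"] exI[of _ "y (Inr ())"]) simp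
qed

lemma lp_max_attained:
  fixes M :: "'r \<Rightarrow> 'v \<Rightarrow> real" and c :: "'v \<Rightarrow> real"
  assumes fin: "finite I" "finite V" and x0: "x0 \<in> ineq_polyhedron I V M b"
    and bdd: "\<forall>x\<in>ineq_polyhedron I V M b. (\<Sum>v\<in>V. c v * x v) \<le> B"
  shows "\<exists>x\<in>ineq_polyhedron I V M b. \<forall>z\<in>ineq_polyhedron I V M b. (\<Sum>v\<in>V. c v * z v) \<le> (\<Sum>v\<in>V. c v * x v)"
proof (rule ccontr)
  assume no_max: "\<not> ?thesis"
  define P where "P = ineq_polyhedron I V M b"
  define obj where "obj x = (\<Sum>v\<in>V. c v * x v)" for x
  define s where "s = (SUP x\<in>P. obj x)"
  have le_s: "obj x \<le> s" if "x \<in> P" for x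
    unfolding s_def using bdd that by (intro cSUP_upper) (auto simp: obj_def P_def bdd_above_def)
  have "\<forall>x\<in>P. - s < (\<Sum>v\<in>V. - c v * x v)"
    using no_max le_s by (force simp: P_def obj_def sum_negf not_le)
  then obtain y t where y: "\<forall>i\<in>I. 0 \<le> y i" and t: "0 \<le> t"
      and cert: "\<forall>v\<in>V. (\<Sum>i\<in>I. y i * M i v) + t * - c v = 0" "(\<Sum>i\<in>I. y i * b i) + t * - s < 0"
    using farkas_objective_bound[OF fin, where M = M and b = b and c = "\<lambda>v. - c v" and \<beta> = "- s"]
    unfolding P_def by blast
  have key: "t * obj x \<le> (\<Sum>i\<in>I. y i * b i)" if "x \<in> P" for x
  proof -
    have "t * obj x = (\<Sum>v\<in>V. (\<Sum>i\<in>I. y i * M i v) * x v)"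
      using cert(1) by (auto simp: obj_def sum_distrib_left intro!: sum.cong)
    also have "\<dots> = (\<Sum>i\<in>I. y i * (\<Sum>v\<in>V. M i v * x v))"
      by (rule sum_weighted_rows[symmetric])
    also have "\<dots> \<le> (\<Sum>i\<in>I. y i * b i)"
      using that y by (auto simp: P_def ineq_polyhedron_def intro!: sum_mono mult_left_mono)
    finally show ?thesis .
  qed
  show False
  proof (cases "t = 0")
    case True thus False using key[of x0] cert(2) x0 by (simp add: P_def)
  next
    case False
    hence "obj x \<le> (\<Sum>i\<in>I. y i * b i) / t" if "x \<in> P" for x
      using key[OF that] t by (simp add: field_simps)
    hence "s \<le> (\<Sum>i\<in>I. y i * b i) / t"
      unfolding s_def using x0 by (intro cSUP_least) (auto simp: P_def)
    thus False using cert(2) t False by (simp add: field_simps)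
  qed
qed

lemma lp_strong_duality:
  fixes I :: "'r set" and V :: "'v set" and M :: "'r \<Rightarrow> 'v \<Rightarrow> real" and c :: "'v \<Rightarrow> real"
  defines "dual_feasible y \<equiv> (\<forall>i\<in>I. 0 \<le> y i) \<and> (\<forall>v\<in>V. (\<Sum>i\<in>I. y i * M i v) = - c v)"
  assumes fin: "finite I" "finite V" and y0: "dual_feasible y0"
    and y0_opt: "\<forall>y. dual_feasible y \<longrightarrow> (\<Sum>i\<in>I. y0 i * b i) \<le> (\<Sum>i\<in>I. y i * b i)"
  shows "\<exists>x\<in>ineq_polyhedron I V M b. (\<Sum>v\<in>V. c v * x v) \<le> - (\<Sum>i\<in>I. y0 i * b i)"
proof (rule ccontr)
  assume "\<not> ?thesis"
  then obtain y t where y: "\<forall>i\<in>I. 0 \<le> y i" and t: "0 \<le> t"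
      and cert: "\<forall>v\<in>V. (\<Sum>i\<in>I. y i * M i v) + t * c v = 0"
        "(\<Sum>i\<in>I. y i * b i) + t * - (\<Sum>i\<in>I. y0 i * b i) < 0"
    using farkas_objective_bound[OF fin, where M = M and b = b and c = c and \<beta> = "- (\<Sum>i\<in>I. y0 i * b i)"]
    by (force simp: not_le)
  \<comment> \<open>The certificate, averaged with the optimal dual solution, is a better dual solution.\<close>
  define z where "z i = (y i + y0 i) / (1 + t)" for i
  have "dual_feasible z"
  proof -
    have "(\<Sum>i\<in>I. z i * M i v) = - c v" if "v \<in> V" for v
    proof -
      have "(\<Sum>i\<in>I. y i * M i v) = - t * c v" "(\<Sum>i\<in>I. y0 i * M i v) = - c v"
        using cert(1) y0 that by (auto simp: dual_feasible_def eq_neg_iff_add_eq_0)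
      thus ?thesis using t by (simp add: z_def sum_divide_distrib[symmetric] sum.distrib
          distrib_right field_simps)
    qed
    moreover have "0 \<le> z i" if "i \<in> I" for i
      using y y0 that t by (simp add: z_def dual_feasible_def)
    ultimately show ?thesis by (simp add: dual_feasible_def)
  qed
  moreover have "(\<Sum>i\<in>I. z i * b i) < (\<Sum>i\<in>I. y0 i * b i)"
  proof -
    have "(\<Sum>i\<in>I. y i * b i) + (\<Sum>i\<in>I. y0 i * b i) < (1 + t) * (\<Sum>i\<in>I. y0 i * b i)"
      using cert(2) by (simp add: algebra_simps)
    thus ?thesis using t
      by (simp add: z_def sum_divide_distrib[symmetric] sum.distrib[symmetric] distrib_right
          field_simps)
  qed
  ultimately show False using y0_opt by fastforce
qed

lemma polyhedron_image_separation:
  fixes N :: "'k \<Rightarrow> 'v \<Rightarrow> real" and D :: "'k \<Rightarrow> real"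
  assumes fin: "finite I" "finite V" "finite K"
    and miss: "\<forall>x\<in>ineq_polyhedron I V M b. \<exists>k\<in>K. (\<Sum>v\<in>V. N k v * x v) \<noteq> D k"
  shows "\<exists>w. \<forall>x\<in>ineq_polyhedron I V M b.
           (\<Sum>k\<in>K. w k * D k) < (\<Sum>k\<in>K. w k * (\<Sum>v\<in>V. N k v * x v))"
proof -
  \<comment> \<open>Adjoin the equations \<open>N x = D\<close> as pairs of inequalities.\<close>
  define M' where "M' = case_sum M (case_sum N (\<lambda>k v. - N k v))"
  define b' where "b' = case_sum b (case_sum D (\<lambda>k. - D k))"
  have "ineq_polyhedron (I <+> (K <+> K)) V M' b' = {}"
    using miss unfolding M'_def b'_def ineq_polyhedron_Plus
    by (fastforce simp: ineq_polyhedron_def sum_negf)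
  then obtain y where y: "farkas_certificate (I <+> (K <+> K)) V M' b' y"
    using farkas[of "I <+> (K <+> K)" V M' b'] fin by auto
  define w where "w k = y (Inr (Inl k)) - y (Inr (Inr k))" for k
  have split: "(\<Sum>i\<in>I <+> (K <+> K). y i * case_sum f (case_sum g (\<lambda>k. - g k)) i)
      = (\<Sum>i\<in>I. y (Inl i) * f i) + (\<Sum>k\<in>K. w k * g k)" for f g
    using fin by (simp add: sum.Plus w_def sum_subtractf left_diff_distrib sum_negf)
  have "(\<Sum>k\<in>K. w k * D k) < (\<Sum>k\<in>K. w k * (\<Sum>v\<in>V. N k v * x v))"
    if x: "x \<in> ineq_polyhedron I V M b" for x
  proof -
    have "(\<Sum>i\<in>I. y (Inl i) * b i) + (\<Sum>k\<in>K. w k * D k) < 0"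
      using y split[of b D] by (simp add: farkas_certificate_def b'_def)
    moreover have "(\<Sum>i\<in>I. y (Inl i) * (\<Sum>v\<in>V. M i v * x v))
        + (\<Sum>k\<in>K. w k * (\<Sum>v\<in>V. N k v * x v)) = 0"
    proof -
      have "(\<Sum>v\<in>V. M' i v * x v) = case_sum (\<lambda>i. \<Sum>v\<in>V. M i v * x v)
          (case_sum (\<lambda>k. \<Sum>v\<in>V. N k v * x v) (\<lambda>k. - (\<Sum>v\<in>V. N k v * x v))) i" for i
        by (auto simp: M'_def sum_negf split: sum.split)
      thus ?thesis using farkas_certificate_sum[OF y, of x] fin by (simp only: split finite_Plus_iff)
    qed
    moreover have "(\<Sum>i\<in>I. y (Inl i) * (\<Sum>v\<in>V. M i v * x v)) \<le> (\<Sum>i\<in>I. y (Inl i) * b i)"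
      using x y by (auto simp: ineq_polyhedron_def farkas_certificate_def intro!: sum_mono mult_left_mono)
    ultimately show ?thesis by linarith
  qed
  thus ?thesis by blast
qed

section \<open>Abel summation\<close>

definition down_closed :: "('a \<Rightarrow> 'k::ord) \<Rightarrow> 'a set \<Rightarrow> 'a set \<Rightarrow> bool" where
  "down_closed \<kappa> A U \<longleftrightarrow> U \<subseteq> A \<and> (\<forall>i\<in>U. \<forall>j\<in>A. \<kappa> j \<le> \<kappa> i \<longrightarrow> j \<in> U)"

lemma down_closed_upper_set: "down_closed (\<lambda>j. - f j) A {j\<in>A. (c::real) \<le> f j}"
  by (auto simp: down_closed_def)

lemma abel_nonneg:
  fixes f u :: "'a \<Rightarrow> real"
  assumes "finite I" "\<forall>i\<in>I. 0 \<le> f i" "\<forall>i\<in>I. 0 \<le> (\<Sum>j\<in>{j\<in>I. f i \<le> f j}. u j)"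
  shows "0 \<le> (\<Sum>i\<in>I. f i * u i)"
  using assms
proof (induction "card I" arbitrary: I f rule: less_induct)
  case less
  show ?case
  proof (cases "I = {}")
    case True thus ?thesis by simp
  next
    case False
    define c where "c = Min (f ` I)"
    have "c \<in> f ` I" unfolding c_def using False less.prems(1) by (intro Min_in) auto
    then obtain i0 where i0: "i0 \<in> I" "f i0 = c" by auto
    have c_le: "c \<le> f i" if "i \<in> I" for i using that less.prems(1) by (simp add: c_def)
    define I' where "I' = {i\<in>I. c < f i}"
    have I'_sub: "I' \<subseteq> I" by (auto simp: I'_def)
    have "0 \<le> (\<Sum>i\<in>I'. (f i - c) * u i)"
    proof (rule less.hyps)
      show "card I' < card I"
        using i0 less.prems(1) by (intro psubset_card_mono) (auto simp: I'_def)
      show "finite I'" using less.prems(1) I'_sub finite_subset by blast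
      show "\<forall>i\<in>I'. 0 \<le> f i - c" by (auto simp: I'_def)
      have "{j\<in>I'. f i - c \<le> f j - c} = {j\<in>I. f i \<le> f j}" if "i \<in> I'" for i
        using that by (auto simp: I'_def)
      thus "\<forall>i\<in>I'. 0 \<le> (\<Sum>j\<in>{j\<in>I'. f i - c \<le> f j - c}. u j)"
        using less.prems(3) I'_sub by auto
    qed
    also have "(\<Sum>i\<in>I'. (f i - c) * u i) = (\<Sum>i\<in>I. (f i - c) * u i)"
      using less.prems(1) I'_sub c_le by (intro sum.mono_neutral_left) (auto simp: I'_def less_le)
    finally have "0 \<le> (\<Sum>i\<in>I. (f i - c) * u i)" .
    moreover have "{j\<in>I. f i0 \<le> f j} = I" using i0 c_le by auto
    hence "0 \<le> (\<Sum>i\<in>I. u i)" using less.prems(3) i0 by metis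
    moreover have "(\<Sum>i\<in>I. f i * u i) = (\<Sum>i\<in>I. (f i - c) * u i) + c * (\<Sum>i\<in>I. u i)"
      by (simp add: sum_distrib_left sum.distrib[symmetric] algebra_simps)
    moreover have "0 \<le> c" using i0 less.prems(2) by auto
    ultimately show ?thesis by simp
  qed
qed

lemma abel_nonneg_sum_zero:
  fixes f u :: "'a \<Rightarrow> real"
  assumes fin: "finite I" and zero: "(\<Sum>i\<in>I. u i) = 0"
    and upper: "\<forall>i\<in>I. 0 \<le> (\<Sum>j\<in>{j\<in>I. f i \<le> f j}. u j)"
  shows "0 \<le> (\<Sum>i\<in>I. f i * u i)"
proof -
  define c where "c = Min (f ` I)"
  have "0 \<le> (\<Sum>i\<in>I. (f i - c) * u i)"
    using fin upper by (intro abel_nonneg) (auto simp: c_def)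
  moreover have "(\<Sum>i\<in>I. f i * u i) = (\<Sum>i\<in>I. (f i - c) * u i) + c * (\<Sum>i\<in>I. u i)"
    by (simp add: sum_distrib_left sum.distrib[symmetric] algebra_simps)
  ultimately show ?thesis using zero by simp
qed

lemma down_closed_gap:
  fixes f :: "'a \<Rightarrow> real"
  assumes fin: "finite I" and pos: "\<forall>i\<in>I. 0 < f i"
    and U: "down_closed (\<lambda>j. - f j) I U" "U \<noteq> {}"
  shows "\<exists>\<epsilon>>0. (\<forall>i\<in>U. \<epsilon> \<le> f i) \<and> (\<forall>i\<in>U. \<forall>j\<in>I - U. f j \<le> f i - \<epsilon>)"
proof -
  have U_sub: "U \<subseteq> I" using U by (simp add: down_closed_def)
  have below: "f j < f i" if "i \<in> U" "j \<in> I - U" for i j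
    using U that by (force simp: down_closed_def)
  have finU: "finite U" "finite (I - U)" using fin U_sub finite_subset by auto
  have "Min (f ` U) \<in> f ` U" using finU U(2) by (intro Min_in) auto
  then obtain i0 where i0: "i0 \<in> U" "Min (f ` U) = f i0" by auto
  have i0_min: "f i0 \<le> f i" if "i \<in> U" for i
    using that finU by (simp flip: i0(2))
  show ?thesis
  proof (cases "I - U = {}")
    case True
    thus ?thesis using i0 i0_min pos U_sub by (intro exI[of _ "f i0"]) auto
  next
    case False
    have "Max (f ` (I - U)) \<in> f ` (I - U)" using finU False by (intro Max_in) auto
    then obtain j0 where j0: "j0 \<in> I - U" "Max (f ` (I - U)) = f j0" by auto
    have "f j \<le> f j0" if "j \<in> I - U" for j
      using that finU by (simp flip: j0(2))
    moreover have "0 < f j0" using pos j0 by auto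
    ultimately show ?thesis using below[OF i0(1) j0(1)] i0_min
      by (intro exI[of _ "f i0 - f j0"]) force
  qed
qed

lemma abel_upper_sum_eq_0:
  fixes f u :: "'a \<Rightarrow> real"
  assumes fin: "finite I" and pos: "\<forall>i\<in>I. 0 < f i"
    and upper: "\<forall>U. down_closed (\<lambda>j. - f j) I U \<longrightarrow> 0 \<le> (\<Sum>j\<in>U. u j)"
    and total: "(\<Sum>i\<in>I. f i * u i) \<le> 0"
    and U: "down_closed (\<lambda>j. - f j) I U"
  shows "(\<Sum>j\<in>U. u j) = 0"
proof (cases "U = {}")
  case False
  have U_sub: "U \<subseteq> I" and U_up: "\<And>i j. i \<in> U \<Longrightarrow> j \<in> I \<Longrightarrow> f i \<le> f j \<Longrightarrow> j \<in> U"
    using U by (auto simp: down_closed_def)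
  obtain \<epsilon> where \<epsilon>: "0 < \<epsilon>" "\<forall>i\<in>U. \<epsilon> \<le> f i" "\<forall>i\<in>U. \<forall>j\<in>I - U. f j \<le> f i - \<epsilon>"
    using down_closed_gap[OF fin pos U False] by blast
  \<comment> \<open>Lowering \<open>f\<close> by \<open>\<epsilon>\<close> on \<open>U\<close> keeps it nonnegative and monotone.\<close>
  define f' where "f' j = f j - (if j \<in> U then \<epsilon> else 0)" for j
  have mono: "f' j \<le> f' k" if "j \<in> I" "k \<in> I" "f j \<le> f k" for j k
    using that U_up \<epsilon>(3) by (auto simp: f'_def)
  have "0 \<le> (\<Sum>i\<in>I. f' i * u i)"
  proof (rule abel_nonneg[OF fin])
    show "\<forall>i\<in>I. 0 \<le> f' i"
      using \<epsilon>(2) pos by (auto simp: f'_def less_imp_le)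
    have "down_closed (\<lambda>j. - f j) I {j\<in>I. f' i \<le> f' j}" for i
      using mono by (fastforce simp: down_closed_def)
    thus "\<forall>i\<in>I. 0 \<le> (\<Sum>j\<in>{j\<in>I. f' i \<le> f' j}. u j)" using upper by blast
  qed
  moreover have "(\<Sum>i\<in>I. f i * u i) = (\<Sum>i\<in>I. f' i * u i) + \<epsilon> * (\<Sum>j\<in>U. u j)"
  proof -
    have "(\<Sum>i\<in>I. f i * u i) = (\<Sum>i\<in>I. f' i * u i) + (\<Sum>i\<in>I. if i \<in> U then \<epsilon> * u i else 0)"
      unfolding sum.distrib[symmetric] by (rule sum.cong) (auto simp: f'_def algebra_simps)
    also have "(\<Sum>i\<in>I. if i \<in> U then \<epsilon> * u i else 0) = \<epsilon> * (\<Sum>j\<in>U. u j)"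
      using fin U_sub by (simp add: sum.inter_restrict[symmetric] Int_absorb1 sum_distrib_left)
    finally show ?thesis .
  qed
  ultimately have "\<epsilon> * (\<Sum>j\<in>U. u j) \<le> 0" using total by linarith
  hence "(\<Sum>j\<in>U. u j) \<le> 0" using \<epsilon>(1) by (simp add: mult_le_0_iff)
  thus ?thesis using upper U by force
qed simp

section \<open>Greedy allocations from extensibility\<close>

definition agent_delay :: "'g set \<Rightarrow> ('a \<Rightarrow> 'g \<Rightarrow> real) \<Rightarrow> ('a \<Rightarrow> 'g \<Rightarrow> real) \<Rightarrow> 'a \<Rightarrow> real" where
  "agent_delay G d X i = (\<Sum>j\<in>G. d i j * X i j)"

lemma delay_eq_sum_agent_delay: "delay G d S X = (\<Sum>i\<in>S. agent_delay G d X i)"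
  by (simp add: delay_def agent_delay_def)

lemma delay_singleton: "delay G d {i} X = agent_delay G d X i"
  by (simp add: delay_def agent_delay_def)

lemma LP_obj_eq_sum_agent_delay: "LP_obj A G d lam X = (\<Sum>i\<in>A. lam i * agent_delay G d X i)"
  by (simp add: LP_obj_def agent_delay_def)

lemma pay_eq_sum_singleton: "pay G S X p = (\<Sum>i\<in>S. pay G {i} X p)"
  by (simp add: pay_def)

lemma delay_union:
  "finite S \<Longrightarrow> finite T \<Longrightarrow> S \<inter> T = {} \<Longrightarrow> delay G d (S \<union> T) X = delay G d S X + delay G d T X"
  by (simp add: delay_def sum.union_disjoint)

lemma admissible_for_mono:
  "admissible_for A G C a r S X \<Longrightarrow> T \<subseteq> S \<Longrightarrow> admissible_for A G C a r T X"
  by (auto simp: admissible_for_def)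

lemma sorted_down_closed_prefix:
  fixes \<kappa> :: "'a \<Rightarrow> 'k::linorder"
  assumes sorted: "sorted (map \<kappa> \<sigma>)" and U: "down_closed \<kappa> (set \<sigma>) U"
  shows "set (takeWhile (\<lambda>j. j \<in> U) \<sigma>) = U"
proof
  show "set (takeWhile (\<lambda>j. j \<in> U) \<sigma>) \<subseteq> U" by (auto dest: set_takeWhileD)
  show "U \<subseteq> set (takeWhile (\<lambda>j. j \<in> U) \<sigma>)"
  proof
    fix j assume j: "j \<in> U"
    show "j \<in> set (takeWhile (\<lambda>j. j \<in> U) \<sigma>)"
    proof (rule ccontr)
      assume "j \<notin> set (takeWhile (\<lambda>j. j \<in> U) \<sigma>)"
      moreover have "j \<in> set \<sigma>" using j U by (auto simp: down_closed_def)
      ultimately have "j \<in> set (dropWhile (\<lambda>j. j \<in> U) \<sigma>)"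
        using takeWhile_dropWhile_id[of "\<lambda>j. j \<in> U" \<sigma>] by (metis Un_iff set_append)
      then obtain x rest where split: "dropWhile (\<lambda>j. j \<in> U) \<sigma> = x # rest" "j \<in> set (x # rest)"
        by (cases "dropWhile (\<lambda>j. j \<in> U) \<sigma>") auto
      have "x \<notin> U" "x \<in> set \<sigma>"
        using split(1) by (metis dropWhile_eq_Cons_conv, metis list.set_intros(1) set_dropWhileD)
      moreover have "sorted (map \<kappa> (x # rest))"
        using sorted takeWhile_dropWhile_id[of "\<lambda>j. j \<in> U" \<sigma>] split(1)
        by (metis map_append sorted_append)
      hence "\<kappa> x \<le> \<kappa> j" using split(2) by auto
      ultimately show False using U j by (auto simp: down_closed_def)
    qed
  qed
qed

lemma jointly_optimal_prefixes:
  assumes ext: "extensible A G C a r d" and \<sigma>: "distinct \<sigma>" "set \<sigma> \<subseteq> A"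
  shows "\<exists>X. \<forall>k. jointly_optimal A G C a r d (set (take k \<sigma>)) X"
  using \<sigma>
proof (induction \<sigma> rule: rev_induct)
  case Nil
  have "jointly_optimal A G C a r d {} (\<lambda>_ _. 0)"
    by (simp add: jointly_optimal_def admissible_for_def nonneg_alloc_def supply_respecting_def delay_def)
  thus ?case by auto
next
  case (snoc b \<tau>)
  obtain X where X: "\<forall>k. jointly_optimal A G C a r d (set (take k \<tau>)) X"
    using snoc by auto
  have "jointly_optimal A G C a r d (set \<tau>) X" using X[rule_format, of "length \<tau>"] by simp
  moreover have "set \<tau> \<subset> A" "b \<in> A - set \<tau>" using snoc.prems by auto
  ultimately obtain X' where X': "jointly_optimal A G C a r d (insert b (set \<tau>)) X'"
    "\<forall>i\<in>set \<tau>. delay G d {i} X' = delay G d {i} X"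
    using ext unfolding extensible_def by blast
  have "jointly_optimal A G C a r d (set (take k (\<tau> @ [b]))) X'" for k
  proof (cases "k \<le> length \<tau>")
    case True
    hence take_eq: "take k (\<tau> @ [b]) = take k \<tau>" by simp
    have "delay G d (set (take k \<tau>)) X' = delay G d (set (take k \<tau>)) X"
      unfolding delay_eq_sum_agent_delay using X'(2) set_take_subset[of k \<tau>]
      by (intro sum.cong) (auto simp: delay_singleton)
    moreover have "admissible_for A G C a r (set (take k \<tau>)) X'"
      using X'(1) set_take_subset[of k \<tau>] by (auto simp: jointly_optimal_def admissible_for_def)
    ultimately show ?thesis using X[rule_format, of k] unfolding take_eq by (simp add: jointly_optimal_def)
  next
    case False
    thus ?thesis using X' by simp
  qed
  thus ?case by blast
qed

lemma greedy_allocation: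
  fixes \<kappa> :: "'a \<Rightarrow> 'k::linorder"
  assumes fin: "finite A" and ext: "extensible A G C a r d"
  shows "\<exists>g. \<forall>U. down_closed \<kappa> A U \<longrightarrow> jointly_optimal A G C a r d U g"
proof -
  obtain xs where xs: "set xs = A" "distinct xs" using finite_distinct_list[OF fin] by blast
  define \<sigma> where "\<sigma> = sort_key \<kappa> xs"
  have \<sigma>: "set \<sigma> = A" "distinct \<sigma>" "sorted (map \<kappa> \<sigma>)" using xs by (auto simp: \<sigma>_def)
  obtain g where g: "\<forall>k. jointly_optimal A G C a r d (set (take k \<sigma>)) g"
    using jointly_optimal_prefixes[OF ext \<sigma>(2)] \<sigma>(1) by auto
  have "jointly_optimal A G C a r d U g" if "down_closed \<kappa> A U" for U
  proof -
    have "set (take (length (takeWhile (\<lambda>j. j \<in> U) \<sigma>)) \<sigma>) = U"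
      using sorted_down_closed_prefix[OF \<sigma>(3)] that \<sigma>(1) by (simp add: takeWhile_eq_take[symmetric])
    thus ?thesis using g by metis
  qed
  thus ?thesis by blast
qed

section \<open>The market LP as a system of linear inequalities\<close>

text \<open>The linear program on \<open>x :: 'a \<times> 'g \<Rightarrow> real\<close> (allocations in uncurried form): each row
  \<open>\<rho>\<close> is a constraint \<open>(\<Sum>v\<in>A \<times> G. lp_coeff a d lam \<rho> v * x v) \<le> lp_rhs r \<theta> \<rho>\<close>, namely
  nonnegativity, CC, supply, and \<open>LP_obj \<le> \<theta>\<close>.\<close>

datatype ('a, 'g, 'c) lp_row = Nonneg 'a 'g | Cover 'a 'c | Supply 'g | Objective

definition adm_rows :: "'a set \<Rightarrow> 'g set \<Rightarrow> 'c set \<Rightarrow> ('a, 'g, 'c) lp_row set" where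
  "adm_rows A G C = (\<lambda>(i, j). Nonneg i j) ` (A \<times> G) \<union> (\<lambda>(i, k). Cover i k) ` (A \<times> C) \<union> Supply ` G"

primrec lp_coeff :: "('a \<Rightarrow> 'g \<Rightarrow> 'c \<Rightarrow> real) \<Rightarrow> ('a \<Rightarrow> 'g \<Rightarrow> real) \<Rightarrow> ('a \<Rightarrow> real)
    \<Rightarrow> ('a, 'g, 'c) lp_row \<Rightarrow> 'a \<times> 'g \<Rightarrow> real" where
  "lp_coeff a d lam (Nonneg i j) = (\<lambda>v. if v = (i, j) then -1 else 0)"
| "lp_coeff a d lam (Cover i k) = (\<lambda>(i', j). if i' = i then - a i j k else 0)"
| "lp_coeff a d lam (Supply j) = (\<lambda>(i, j'). if j' = j then 1 else 0)"
| "lp_coeff a d lam Objective = (\<lambda>(i, j). lam i * d i j)"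

primrec lp_rhs :: "('a \<Rightarrow> 'c \<Rightarrow> real) \<Rightarrow> real \<Rightarrow> ('a, 'g, 'c) lp_row \<Rightarrow> real" where
  "lp_rhs r \<theta> (Nonneg i j) = 0"
| "lp_rhs r \<theta> (Cover i k) = - r i k"
| "lp_rhs r \<theta> (Supply j) = 1"
| "lp_rhs r \<theta> Objective = \<theta>"

lemma finite_adm_rows: "finite A \<Longrightarrow> finite G \<Longrightarrow> finite C \<Longrightarrow> finite (adm_rows A G C)"
  by (simp add: adm_rows_def)

lemma ball_adm_rows:
  "(\<forall>\<rho>\<in>adm_rows A G C. P \<rho>) \<longleftrightarrow>
     (\<forall>i\<in>A. \<forall>j\<in>G. P (Nonneg i j)) \<and> (\<forall>i\<in>A. \<forall>k\<in>C. P (Cover i k)) \<and> (\<forall>j\<in>G. P (Supply j))"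
  by (auto simp: adm_rows_def)

lemma sum_adm_rows:
  assumes "finite A" "finite G" "finite C"
  shows "(\<Sum>\<rho>\<in>adm_rows A G C. F \<rho>) =
    (\<Sum>i\<in>A. \<Sum>j\<in>G. F (Nonneg i j)) + (\<Sum>i\<in>A. \<Sum>k\<in>C. F (Cover i k)) + (\<Sum>j\<in>G. F (Supply j))"
proof -
  have inj: "inj_on (\<lambda>(i, j). Nonneg i j) (A \<times> G)" "inj_on (\<lambda>(i, k). Cover i k) (A \<times> C)" "inj_on Supply G"
    by (auto simp: inj_on_def)
  have "(\<Sum>\<rho>\<in>adm_rows A G C. F \<rho>) = (\<Sum>\<rho>\<in>(\<lambda>(i, j). Nonneg i j) ` (A \<times> G). F \<rho>)
      + (\<Sum>\<rho>\<in>(\<lambda>(i, k). Cover i k) ` (A \<times> C). F \<rho>) + (\<Sum>\<rho>\<in>Supply ` G. F \<rho>)"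
  proof -
    have "(\<lambda>(i, j). Nonneg i j) ` (A \<times> G) \<inter> (\<lambda>(i, k). Cover i k) ` (A \<times> C) = {}"
      "((\<lambda>(i, j). Nonneg i j) ` (A \<times> G) \<union> (\<lambda>(i, k). Cover i k) ` (A \<times> C)) \<inter> Supply ` G = {}"
      by auto
    thus ?thesis unfolding adm_rows_def using assms by (simp add: sum.union_disjoint)
  qed
  also have "\<dots> = (\<Sum>i\<in>A. \<Sum>j\<in>G. F (Nonneg i j)) + (\<Sum>i\<in>A. \<Sum>k\<in>C. F (Cover i k)) + (\<Sum>j\<in>G. F (Supply j))"
    by (simp only: sum.reindex[OF inj(1)] sum.reindex[OF inj(2)] sum.reindex[OF inj(3)]
        sum.cartesian_product comp_def) (simp add: case_prod_beta)
  finally show ?thesis .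
qed

lemma double_sum_if_eq:
  assumes "finite A"
  shows "(\<Sum>i\<in>A. \<Sum>j\<in>J. if i = i0 then f i j else 0) = (if i0 \<in> A then (\<Sum>j\<in>J. f i0 j) else 0)"
    and "(\<Sum>i\<in>A. \<Sum>j\<in>J. if i0 = i then f i j else 0) = (if i0 \<in> A then (\<Sum>j\<in>J. f i0 j) else 0)"
proof -
  have "(\<Sum>i\<in>A. \<Sum>j\<in>J. if i = i0 then f i j else 0) = (\<Sum>i\<in>A. if i = i0 then (\<Sum>j\<in>J. f i0 j) else 0)"
    by (intro sum.cong) auto
  thus "(\<Sum>i\<in>A. \<Sum>j\<in>J. if i = i0 then f i j else 0) = (if i0 \<in> A then (\<Sum>j\<in>J. f i0 j) else 0)"
    using assms by (simp add: sum.delta')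
  thus "(\<Sum>i\<in>A. \<Sum>j\<in>J. if i0 = i then f i j else 0) = (if i0 \<in> A then (\<Sum>j\<in>J. f i0 j) else 0)"
    by (simp add: eq_commute)
qed

context
  fixes A :: "'a set" and G :: "'g set"
  assumes fin: "finite A" "finite G"
begin

lemma sum_agent_goods: "(\<Sum>v\<in>A \<times> G. f v) = (\<Sum>i\<in>A. \<Sum>j\<in>G. f (i, j))"
  by (simp add: sum.cartesian_product)

lemma sum_agent_goods_if_pair:
  assumes "i0 \<in> A" "j0 \<in> G"
  shows "(\<Sum>i\<in>A. \<Sum>j\<in>G. if i0 = i \<and> j0 = j then f i j else 0) = f i0 j0"
proof -
  have "(\<Sum>i\<in>A. \<Sum>j\<in>G. if i0 = i \<and> j0 = j then f i j else 0) = (\<Sum>i\<in>A. if i0 = i then f i j0 else 0)"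
    using fin assms by (intro sum.cong) (auto simp: sum.delta)
  also have "\<dots> = f i0 j0" using fin assms by (simp add: sum.delta)
  finally show ?thesis .
qed

lemma lp_row_value:
  "i \<in> A \<Longrightarrow> j \<in> G \<Longrightarrow> (\<Sum>v\<in>A \<times> G. lp_coeff a d lam (Nonneg i j) v * x v) = - x (i, j)"
  "i \<in> A \<Longrightarrow> (\<Sum>v\<in>A \<times> G. lp_coeff a d lam (Cover i k) v * x v) = - (\<Sum>j\<in>G. a i j k * x (i, j))"
  "j \<in> G \<Longrightarrow> (\<Sum>v\<in>A \<times> G. lp_coeff a d lam (Supply j) v * x v) = (\<Sum>i\<in>A. x (i, j))"
  "(\<Sum>v\<in>A \<times> G. lp_coeff a d lam Objective v * x v) = LP_obj A G d lam (curry x)"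
proof -
  show "(\<Sum>v\<in>A \<times> G. lp_coeff a d lam (Nonneg i j) v * x v) = - x (i, j)" if "i \<in> A" "j \<in> G"
    using fin that by (simp add: if_distrib[of "\<lambda>z. z * _"] sum.delta cong: if_cong)
  show "(\<Sum>v\<in>A \<times> G. lp_coeff a d lam (Cover i k) v * x v) = - (\<Sum>j\<in>G. a i j k * x (i, j))"
    if "i \<in> A"
    using that by (simp add: sum_agent_goods if_distrib[of "\<lambda>z. z * _"] double_sum_if_eq[OF fin(1)]
        sum_negf cong: if_cong)
  show "(\<Sum>v\<in>A \<times> G. lp_coeff a d lam (Supply j) v * x v) = (\<Sum>i\<in>A. x (i, j))" if "j \<in> G"
    using fin that by (simp add: sum_agent_goods if_distrib[of "\<lambda>z. z * _"] sum.delta cong: if_cong)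
  show "(\<Sum>v\<in>A \<times> G. lp_coeff a d lam Objective v * x v) = LP_obj A G d lam (curry x)"
    by (simp add: sum_agent_goods LP_obj_def sum_distrib_left mult.assoc)
qed

lemma lp_delay_value:
  assumes "T \<subseteq> A"
  shows "(\<Sum>v\<in>A \<times> G. (if fst v \<in> T then d (fst v) (snd v) else 0) * x v) = delay G d T (curry x)"
proof -
  have "(\<Sum>v\<in>A \<times> G. (if fst v \<in> T then d (fst v) (snd v) else 0) * x v)
      = (\<Sum>i\<in>A. if i \<in> T then (\<Sum>j\<in>G. d i j * x (i, j)) else 0)"
    by (simp add: sum_agent_goods) (intro sum.cong; simp)
  also have "\<dots> = delay G d T (curry x)"
    using fin assms by (simp add: sum.inter_restrict[symmetric] Int_absorb1 delay_def)
  finally show ?thesis .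
qed

lemma admissible_iff_adm_rows:
  "admissible_for A G C a r A (curry x) \<longleftrightarrow> x \<in> ineq_polyhedron (adm_rows A G C) (A \<times> G) (lp_coeff a d lam) (lp_rhs r \<theta>)"
proof -
  have "x \<in> ineq_polyhedron (adm_rows A G C) (A \<times> G) (lp_coeff a d lam) (lp_rhs r \<theta>) \<longleftrightarrow>
      (\<forall>i\<in>A. \<forall>j\<in>G. - x (i, j) \<le> 0) \<and> (\<forall>i\<in>A. \<forall>k\<in>C. - (\<Sum>j\<in>G. a i j k * x (i, j)) \<le> - r i k) \<and>
      (\<forall>j\<in>G. (\<Sum>i\<in>A. x (i, j)) \<le> 1)"
    by (simp add: ineq_polyhedron_def ball_adm_rows lp_row_value del: lp_coeff.simps cong: ball_cong)
  thus ?thesis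
    by (auto simp: admissible_for_def nonneg_alloc_def CC_def supply_respecting_def)
qed

lemma adm_rows_column:
  assumes "finite C" "i \<in> A" "j \<in> G"
  shows "(\<Sum>\<rho>\<in>adm_rows A G C. y \<rho> * lp_coeff a d lam \<rho> (i, j)) =
    - y (Nonneg i j) - (\<Sum>k\<in>C. y (Cover i k) * a i j k) + y (Supply j)"
proof -
  have "(\<Sum>i'\<in>A. \<Sum>j'\<in>G. y (Nonneg i' j') * lp_coeff a d lam (Nonneg i' j') (i, j)) = - y (Nonneg i j)"
    using sum_agent_goods_if_pair[OF assms(2,3), of "\<lambda>i j. - y (Nonneg i j)"]
    by (simp add: if_distrib[of "\<lambda>z. _ * z"] cong: if_cong)
  moreover have "(\<Sum>i'\<in>A. \<Sum>k\<in>C. y (Cover i' k) * lp_coeff a d lam (Cover i' k) (i, j))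
      = - (\<Sum>k\<in>C. y (Cover i k) * a i j k)"
    using assms by (simp add: if_distrib[of "\<lambda>z. _ * z"] double_sum_if_eq[OF fin(1)] sum_negf
        cong: if_cong)
  moreover have "(\<Sum>j'\<in>G. y (Supply j') * lp_coeff a d lam (Supply j') (i, j)) = y (Supply j)"
    using fin assms by (simp add: if_distrib[of "\<lambda>z. _ * z"] sum.delta cong: if_cong)
  ultimately show ?thesis using fin assms by (simp add: sum_adm_rows)
qed

lemma adm_rows_dual_feasible_iff:
  assumes "finite C"
  shows "(\<forall>\<rho>\<in>adm_rows A G C. 0 \<le> y \<rho>) \<and>
      (\<forall>v\<in>A \<times> G. (\<Sum>\<rho>\<in>adm_rows A G C. y \<rho> * lp_coeff a d lam \<rho> v) = - (case v of (i, j) \<Rightarrow> lam i * d i j))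
    \<longleftrightarrow> DLP_feasible A G C a d lam (\<lambda>i k. y (Cover i k)) (\<lambda>j. y (Supply j)) \<and>
      (\<forall>i\<in>A. \<forall>j\<in>G. y (Nonneg i j) = lam i * d i j - (\<Sum>k\<in>C. a i j k * y (Cover i k)) + y (Supply j))"
proof -
  have column: "(\<Sum>\<rho>\<in>adm_rows A G C. y \<rho> * lp_coeff a d lam \<rho> (i, j)) = - (lam i * d i j) \<longleftrightarrow>
      y (Nonneg i j) = lam i * d i j - (\<Sum>k\<in>C. a i j k * y (Cover i k)) + y (Supply j)"
    if "i \<in> A" "j \<in> G" for i j
    using adm_rows_column[OF assms that] by (simp add: mult.commute) arith
  have slack: "(0 \<le> s \<and> s = l - t + q) \<longleftrightarrow> (t - q \<le> l \<and> s = l - t + q)" for s l t q :: real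
    by auto
  have "(\<forall>\<rho>\<in>adm_rows A G C. 0 \<le> y \<rho>) \<and>
      (\<forall>v\<in>A \<times> G. (\<Sum>\<rho>\<in>adm_rows A G C. y \<rho> * lp_coeff a d lam \<rho> v) = - (case v of (i, j) \<Rightarrow> lam i * d i j))
    \<longleftrightarrow> (\<forall>i\<in>A. \<forall>j\<in>G. 0 \<le> y (Nonneg i j) \<and>
          y (Nonneg i j) = lam i * d i j - (\<Sum>k\<in>C. a i j k * y (Cover i k)) + y (Supply j)) \<and>
      (\<forall>i\<in>A. \<forall>k\<in>C. 0 \<le> y (Cover i k)) \<and> (\<forall>j\<in>G. 0 \<le> y (Supply j))"
    unfolding ball_adm_rows split_paired_Ball_Sigma by (auto simp: column cong: ball_cong)
  thus ?thesis unfolding slack DLP_feasible_def by auto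
qed

lemma adm_rows_dual_value:
  assumes "finite C"
  shows "(\<Sum>\<rho>\<in>adm_rows A G C. y \<rho> * lp_rhs r \<theta> \<rho>) = - DLP_obj A G C r (\<lambda>i k. y (Cover i k)) (\<lambda>j. y (Supply j))"
  using fin assms by (simp add: sum_adm_rows DLP_obj_def sum_negf mult.commute)

end

lemma market_strong_duality:
  assumes fin: "finite A" "finite G" "finite C" and dual_opt: "DLP_optimal A G C a r d lam \<alpha> p"
  shows "\<exists>X. admissible_for A G C a r A X \<and> LP_obj A G d lam X \<le> DLP_obj A G C r \<alpha> p"
proof -
  let ?I = "adm_rows A G C" and ?M = "lp_coeff a d lam" and ?b = "lp_rhs r 0"
  define y0 where "y0 = case_lp_row (\<lambda>i j. lam i * d i j - (\<Sum>k\<in>C. a i j k * \<alpha> i k) + p j) \<alpha> p 0"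
  have "\<exists>x\<in>ineq_polyhedron ?I (A \<times> G) ?M ?b.
      (\<Sum>v\<in>A \<times> G. (case v of (i, j) \<Rightarrow> lam i * d i j) * x v) \<le> - (\<Sum>\<rho>\<in>?I. y0 \<rho> * ?b \<rho>)"
  proof (rule lp_strong_duality)
    show "finite ?I" "finite (A \<times> G)" using fin finite_adm_rows by simp_all
    show "(\<forall>\<rho>\<in>?I. 0 \<le> y0 \<rho>) \<and>
        (\<forall>v\<in>A \<times> G. (\<Sum>\<rho>\<in>?I. y0 \<rho> * ?M \<rho> v) = - (case v of (i, j) \<Rightarrow> lam i * d i j))"
      unfolding adm_rows_dual_feasible_iff[OF fin] using dual_opt by (simp add: y0_def DLP_optimal_def)
    show "\<forall>y. (\<forall>\<rho>\<in>?I. 0 \<le> y \<rho>) \<and>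
        (\<forall>v\<in>A \<times> G. (\<Sum>\<rho>\<in>?I. y \<rho> * ?M \<rho> v) = - (case v of (i, j) \<Rightarrow> lam i * d i j)) \<longrightarrow>
        (\<Sum>\<rho>\<in>?I. y0 \<rho> * ?b \<rho>) \<le> (\<Sum>\<rho>\<in>?I. y \<rho> * ?b \<rho>)"
      unfolding adm_rows_dual_feasible_iff[OF fin] adm_rows_dual_value[OF fin]
      using dual_opt by (simp add: y0_def DLP_optimal_def)
  qed
  then obtain x where x: "x \<in> ineq_polyhedron ?I (A \<times> G) ?M ?b"
      "(\<Sum>v\<in>A \<times> G. (case v of (i, j) \<Rightarrow> lam i * d i j) * x v) \<le> - (\<Sum>\<rho>\<in>?I. y0 \<rho> * ?b \<rho>)" ..
  have "admissible_for A G C a r A (curry x)"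
    using x(1) admissible_iff_adm_rows[OF fin(1,2)] by blast
  moreover have "LP_obj A G d lam (curry x) \<le> DLP_obj A G C r \<alpha> p"
    using x(2) lp_row_value(4)[OF fin(1,2)] by (simp add: case_prod_beta' adm_rows_dual_value[OF fin] y0_def)
  ultimately show ?thesis by blast
qed

section \<open>Optimal allocations under dual optimal prices\<close>

locale dual_optimal_prices =
  fixes A :: "'a set" and G :: "'g set" and C :: "'c set"
    and a :: "'a \<Rightarrow> 'g \<Rightarrow> 'c \<Rightarrow> real" and r :: "'a \<Rightarrow> 'c \<Rightarrow> real" and d :: "'a \<Rightarrow> 'g \<Rightarrow> real"
    and lam :: "'a \<Rightarrow> real" and p :: "'g \<Rightarrow> real" and \<alpha> :: "'a \<Rightarrow> 'c \<Rightarrow> real"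
  assumes finite_A: "finite A" and finite_G: "finite G" and finite_C: "finite C"
    and prices_nonneg: "\<forall>j\<in>G. 0 \<le> p j"
    and dual_optimal: "DLP_optimal A G C a r d lam \<alpha> p"
begin

definition lp_value :: real where
  "lp_value = DLP_obj A G C r \<alpha> p"

definition req_value :: "'a \<Rightarrow> real" where
  "req_value i = (\<Sum>k\<in>C. \<alpha> i k * r i k)"

lemma req_value_le:
  assumes X: "admissible_for A G C a r A X" and i: "i \<in> A"
  shows "req_value i \<le> pay G {i} X p + lam i * agent_delay G d X i"
proof -
  have X_nonneg: "\<forall>j\<in>G. 0 \<le> X i j" and cover: "\<forall>k\<in>C. r i k \<le> (\<Sum>j\<in>G. a i j k * X i j)"
    using X i by (auto simp: admissible_for_def nonneg_alloc_def CC_def)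
  have \<alpha>_nonneg: "\<forall>k\<in>C. 0 \<le> \<alpha> i k"
    and dual_row: "\<forall>j\<in>G. (\<Sum>k\<in>C. a i j k * \<alpha> i k) - p j \<le> lam i * d i j"
    using dual_optimal i by (auto simp: DLP_optimal_def DLP_feasible_def)
  have "req_value i \<le> (\<Sum>k\<in>C. \<alpha> i k * (\<Sum>j\<in>G. a i j k * X i j))"
    unfolding req_value_def using \<alpha>_nonneg cover by (intro sum_mono mult_left_mono) auto
  also have "\<dots> = (\<Sum>j\<in>G. p j * X i j) + (\<Sum>j\<in>G. ((\<Sum>k\<in>C. a i j k * \<alpha> i k) - p j) * X i j)"
    by (simp add: sum_distrib_left sum_distrib_right algebra_simps sum_subtractf sum.swap[of _ C G])
  also have "\<dots> \<le> (\<Sum>j\<in>G. p j * X i j) + (\<Sum>j\<in>G. (lam i * d i j) * X i j)"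
    using dual_row X_nonneg by (intro add_left_mono sum_mono mult_right_mono) auto
  also have "\<dots> = pay G {i} X p + lam i * agent_delay G d X i"
    by (simp add: pay_def agent_delay_def sum_distrib_left mult_ac)
  finally show ?thesis .
qed

lemma pay_le_sum_prices:
  assumes "admissible_for A G C a r A X"
  shows "pay G A X p \<le> (\<Sum>j\<in>G. p j)"
proof -
  have "pay G A X p = (\<Sum>j\<in>G. p j * (\<Sum>i\<in>A. X i j))"
    by (simp add: pay_def sum_distrib_left sum.swap[of _ A G])
  also have "\<dots> \<le> (\<Sum>j\<in>G. p j * 1)"
    using assms prices_nonneg
    by (intro sum_mono mult_left_mono) (auto simp: admissible_for_def supply_respecting_def)
  finally show ?thesis by simp
qed

lemma lp_value_le_LP_obj:
  assumes "admissible_for A G C a r A X"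
  shows "lp_value \<le> LP_obj A G d lam X"
proof -
  have "lp_value \<le> (\<Sum>i\<in>A. req_value i) - pay G A X p"
    using pay_le_sum_prices[OF assms] by (simp add: lp_value_def DLP_obj_def req_value_def mult_ac)
  also have "\<dots> = (\<Sum>i\<in>A. req_value i - pay G {i} X p)"
    by (simp add: sum_subtractf pay_eq_sum_singleton[of G A])
  also have "\<dots> \<le> LP_obj A G d lam X"
    unfolding LP_obj_eq_sum_agent_delay using req_value_le[OF assms]
    by (intro sum_mono) (auto simp: algebra_simps)
  finally show ?thesis .
qed

lemma LP_optimal_iff:
  "LP_optimal A G C a r d lam X \<longleftrightarrow> admissible_for A G C a r A X \<and> LP_obj A G d lam X \<le> lp_value"
proof
  assume X: "LP_optimal A G C a r d lam X"
  obtain X0 where "admissible_for A G C a r A X0" "LP_obj A G d lam X0 \<le> lp_value"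
    using market_strong_duality[OF finite_A finite_G finite_C dual_optimal] by (auto simp: lp_value_def)
  thus "admissible_for A G C a r A X \<and> LP_obj A G d lam X \<le> lp_value"
    using X unfolding LP_optimal_def by force
next
  assume "admissible_for A G C a r A X \<and> LP_obj A G d lam X \<le> lp_value"
  thus "LP_optimal A G C a r d lam X"
    using lp_value_le_LP_obj unfolding LP_optimal_def by force
qed

lemma LP_optimal_exists: "\<exists>X. LP_optimal A G C a r d lam X"
  using market_strong_duality[OF finite_A finite_G finite_C dual_optimal] LP_optimal_iff
  by (auto simp: lp_value_def)

lemma LP_obj_of_LP_optimal: "LP_optimal A G C a r d lam X \<Longrightarrow> LP_obj A G d lam X = lp_value"
  using LP_optimal_iff lp_value_le_LP_obj by force

text \<open>Complementary slackness: at an optimum every agent's inequality \<open>req_value_le\<close> is tight.\<close>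
lemma pay_of_LP_optimal:
  assumes X: "LP_optimal A G C a r d lam X" and i: "i \<in> A"
  shows "pay G {i} X p = req_value i - lam i * agent_delay G d X i"
proof -
  have adm: "admissible_for A G C a r A X" using X by (simp add: LP_optimal_def)
  define e where "e i = pay G {i} X p + lam i * agent_delay G d X i - req_value i" for i
  have e_nonneg: "\<forall>i\<in>A. 0 \<le> e i" using req_value_le[OF adm] by (simp add: e_def)
  have "(\<Sum>i\<in>A. e i) = pay G A X p + LP_obj A G d lam X - (\<Sum>i\<in>A. req_value i)"
    by (simp add: e_def sum_subtractf sum.distrib LP_obj_eq_sum_agent_delay pay_eq_sum_singleton[of G A])
  also have "\<dots> \<le> 0"
    using pay_le_sum_prices[OF adm] LP_obj_of_LP_optimal[OF X]
    by (simp add: lp_value_def DLP_obj_def req_value_def mult_ac)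
  finally have "\<forall>i\<in>A. e i = 0"
    using e_nonneg finite_A sum_nonneg_eq_0_iff[of A e] sum_nonneg[of A e] by force
  thus ?thesis using i by (simp add: e_def eq_diff_eq)
qed

lemma LP_optimal_iff_polyhedron:
  "LP_optimal A G C a r d lam (curry x) \<longleftrightarrow>
     x \<in> ineq_polyhedron (insert Objective (adm_rows A G C)) (A \<times> G) (lp_coeff a d lam) (lp_rhs r lp_value)"
proof -
  have "x \<in> ineq_polyhedron (insert Objective (adm_rows A G C)) (A \<times> G) (lp_coeff a d lam) (lp_rhs r lp_value)
      \<longleftrightarrow> x \<in> ineq_polyhedron (adm_rows A G C) (A \<times> G) (lp_coeff a d lam) (lp_rhs r lp_value) \<and>
        (\<Sum>v\<in>A \<times> G. lp_coeff a d lam Objective v * x v) \<le> lp_value"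
    by (auto simp: ineq_polyhedron_def simp del: lp_coeff.simps)
  thus ?thesis
    by (simp add: LP_optimal_iff admissible_iff_adm_rows[OF finite_A finite_G, of C a r x d lam lp_value]
        lp_row_value(4)[OF finite_A finite_G] del: lp_coeff.simps)
qed

lemma finite_LP_rows: "finite (insert Objective (adm_rows A G C))" "finite (A \<times> G)"
  using finite_adm_rows[OF finite_A finite_G finite_C] finite_A finite_G by simp_all

lemma LP_optimal_le_1:
  assumes "LP_optimal A G C a r d lam X" "i \<in> A" "j \<in> G"
  shows "X i j \<le> 1"
proof -
  have "\<forall>i\<in>A. \<forall>j\<in>G. 0 \<le> X i j" "(\<Sum>i'\<in>A. X i' j) \<le> 1"
    using assms by (auto simp: LP_optimal_def admissible_for_def nonneg_alloc_def supply_respecting_def)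
  moreover have "X i j \<le> (\<Sum>i'\<in>A. X i' j)"
    using calculation(1) assms finite_A by (intro member_le_sum) auto
  ultimately show ?thesis by linarith
qed

lemma LP_optimal_max_delay:
  assumes T: "T \<subseteq> A"
  shows "\<exists>X. LP_optimal A G C a r d lam X \<and>
    (\<forall>Y. LP_optimal A G C a r d lam Y \<longrightarrow> delay G d T Y \<le> delay G d T X)"
proof -
  let ?P = "ineq_polyhedron (insert Objective (adm_rows A G C)) (A \<times> G) (lp_coeff a d lam) (lp_rhs r lp_value)"
  define c where "c v = (if fst v \<in> T then d (fst v) (snd v) else 0)" for v
  have obj: "(\<Sum>v\<in>A \<times> G. c v * x v) = delay G d T (curry x)" for x
    unfolding c_def by (rule lp_delay_value[OF finite_A finite_G T])
  obtain X0 where "LP_optimal A G C a r d lam X0" using LP_optimal_exists by blast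
  hence X0: "case_prod X0 \<in> ?P" by (subst LP_optimal_iff_polyhedron[symmetric]) simp
  have "(\<Sum>v\<in>A \<times> G. c v * x v) \<le> (\<Sum>v\<in>A \<times> G. \<bar>c v\<bar>)" if "x \<in> ?P" for x
  proof (intro sum_mono)
    fix v assume v: "v \<in> A \<times> G"
    have "0 \<le> x v" "x v \<le> 1"
      using that v LP_optimal_le_1[of "curry x" "fst v" "snd v"]
      by (auto simp: LP_optimal_iff_polyhedron[symmetric] LP_optimal_def admissible_for_def
          nonneg_alloc_def)
    hence "c v * x v \<le> \<bar>c v\<bar> * x v" by (intro mult_right_mono) auto
    also have "\<dots> \<le> \<bar>c v\<bar>" using \<open>x v \<le> 1\<close> by (simp add: mult_left_le)
    finally show "c v * x v \<le> \<bar>c v\<bar>" .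
  qed
  then obtain x where x: "x \<in> ?P" "\<forall>z\<in>?P. (\<Sum>v\<in>A \<times> G. c v * z v) \<le> (\<Sum>v\<in>A \<times> G. c v * x v)"
    using lp_max_attained[OF finite_LP_rows X0] by blast
  show ?thesis
  proof (intro exI conjI allI impI)
    show "LP_optimal A G C a r d lam (curry x)" using x(1) by (simp add: LP_optimal_iff_polyhedron)
    fix Y assume "LP_optimal A G C a r d lam Y"
    hence "case_prod Y \<in> ?P" by (subst LP_optimal_iff_polyhedron[symmetric]) simp
    hence "(\<Sum>v\<in>A \<times> G. c v * case_prod Y v) \<le> (\<Sum>v\<in>A \<times> G. c v * x v)" using x(2) by blast
    thus "delay G d T Y \<le> delay G d T (curry x)"
      unfolding obj by simp
  qed
qed

lemma LP_optimal_separation: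
  assumes miss: "\<forall>X. LP_optimal A G C a r d lam X \<longrightarrow> (\<exists>i\<in>A. agent_delay G d X i \<noteq> D i)"
  shows "\<exists>w. \<forall>X. LP_optimal A G C a r d lam X \<longrightarrow>
    (\<Sum>i\<in>A. w i * D i) < (\<Sum>i\<in>A. w i * agent_delay G d X i)"
proof -
  let ?P = "ineq_polyhedron (insert Objective (adm_rows A G C)) (A \<times> G) (lp_coeff a d lam) (lp_rhs r lp_value)"
  define N where "N i v = (if fst v \<in> {i} then d (fst v) (snd v) else 0)" for i v
  have N: "(\<Sum>v\<in>A \<times> G. N i v * x v) = agent_delay G d (curry x) i" if "i \<in> A" for i x
    unfolding N_def delay_singleton[symmetric] using that by (intro lp_delay_value[OF finite_A finite_G]) auto
  have "\<forall>x\<in>?P. \<exists>i\<in>A. (\<Sum>v\<in>A \<times> G. N i v * x v) \<noteq> D i"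
    using miss N by (auto simp: LP_optimal_iff_polyhedron[symmetric])
  then obtain w where w: "\<forall>x\<in>?P. (\<Sum>i\<in>A. w i * D i) < (\<Sum>i\<in>A. w i * (\<Sum>v\<in>A \<times> G. N i v * x v))"
    using polyhedron_image_separation[OF finite_LP_rows finite_A] by blast
  have "(\<Sum>i\<in>A. w i * D i) < (\<Sum>i\<in>A. w i * agent_delay G d X i)"
    if "LP_optimal A G C a r d lam X" for X
    using that w[rule_format, of "case_prod X"] N by (simp add: LP_optimal_iff_polyhedron[symmetric])
  thus ?thesis by blast
qed

end

section \<open>Proper prices balance the budgets\<close>

lemma down_closed_lex_pair:
  fixes f :: "'a \<Rightarrow> 'k::linorder" and h :: "'a \<Rightarrow> 'l::linorder"
  shows "down_closed f A U \<Longrightarrow> down_closed (\<lambda>j. (f j, h j)) A U"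
  unfolding down_closed_def by (metis less_eq_prod_simp order.strict_implies_order)

lemma LP_optimal_of_upper_optimal:
  assumes fin: "finite A" and lam_pos: "\<forall>i\<in>A. 0 < lam i"
    and g: "\<forall>U. down_closed (\<lambda>j. - lam j) A U \<longrightarrow> jointly_optimal A G C a r d U g"
  shows "LP_optimal A G C a r d lam g"
proof -
  have g_adm: "admissible_for A G C a r A g"
    using g by (auto simp: down_closed_def jointly_optimal_def)
  have "LP_obj A G d lam g \<le> LP_obj A G d lam Y" if Y: "admissible_for A G C a r A Y" for Y
  proof -
    have "0 \<le> (\<Sum>i\<in>A. lam i * (agent_delay G d Y i - agent_delay G d g i))"
    proof (rule abel_nonneg[OF fin])
      show "\<forall>i\<in>A. 0 \<le> lam i" using lam_pos by (auto simp: less_imp_le)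
      have "delay G d {j\<in>A. lam i \<le> lam j} g \<le> delay G d {j\<in>A. lam i \<le> lam j} Y" for i
        using g down_closed_upper_set[of lam A "lam i"] admissible_for_mono[OF Y]
        by (auto simp: jointly_optimal_def)
      thus "\<forall>i\<in>A. 0 \<le> (\<Sum>j\<in>{j\<in>A. lam i \<le> lam j}. agent_delay G d Y j - agent_delay G d g j)"
        by (simp add: delay_eq_sum_agent_delay sum_subtractf)
    qed
    thus ?thesis by (simp add: LP_obj_eq_sum_agent_delay sum_subtractf algebra_simps)
  qed
  thus ?thesis using g_adm by (simp add: LP_optimal_def)
qed

lemma upper_delay_eq_of_LP_optimal:
  assumes fin: "finite A" and lam_pos: "\<forall>i\<in>A. 0 < lam i"
    and g: "\<forall>U. down_closed (\<lambda>j. - lam j) A U \<longrightarrow> jointly_optimal A G C a r d U g"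
    and X: "LP_optimal A G C a r d lam X"
  shows "delay G d {j\<in>A. \<mu> < lam j} X = delay G d {j\<in>A. \<mu> < lam j} g"
proof -
  define u where "u j = agent_delay G d X j - agent_delay G d g j" for j
  have g_opt: "LP_optimal A G C a r d lam g" by (rule LP_optimal_of_upper_optimal[OF fin lam_pos g])
  have "LP_obj A G d lam X = LP_obj A G d lam g"
    using X g_opt unfolding LP_optimal_def by (meson order_antisym)
  hence "(\<Sum>i\<in>A. lam i * u i) \<le> 0"
    by (simp add: u_def LP_obj_eq_sum_agent_delay algebra_simps sum_subtractf)
  moreover have "0 \<le> (\<Sum>j\<in>U. u j)" if "down_closed (\<lambda>j. - lam j) A U" for U
  proof -
    have "delay G d U g \<le> delay G d U X"
      using g that X admissible_for_mono[of A G C a r A X U]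
      by (auto simp: jointly_optimal_def LP_optimal_def down_closed_def)
    thus ?thesis by (simp add: u_def delay_eq_sum_agent_delay sum_subtractf)
  qed
  moreover have "down_closed (\<lambda>j. - lam j) A {j\<in>A. \<mu> < lam j}"
    by (auto simp: down_closed_def)
  ultimately have "(\<Sum>j\<in>{j\<in>A. \<mu> < lam j}. u j) = 0"
    using abel_upper_sum_eq_0[OF fin lam_pos] by blast
  thus ?thesis by (simp add: u_def delay_eq_sum_agent_delay sum_subtractf)
qed

lemma greedy_delay_le_on_segment:
  fixes w :: "'a \<Rightarrow> real" and \<mu> c :: real
  assumes fin: "finite A" and lam_pos: "\<forall>i\<in>A. 0 < lam i"
    and g: "\<forall>U. down_closed (\<lambda>j. (- lam j, - w j)) A U \<longrightarrow> jointly_optimal A G C a r d U g"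
    and X: "LP_optimal A G C a r d lam X"
  defines "P \<equiv> {j\<in>A. lam j = \<mu> \<and> c \<le> w j}"
  shows "delay G d P g \<le> delay G d P X"
proof -
  define Pre where "Pre = {j\<in>A. \<mu> < lam j}"
  have g_lam: "\<forall>U. down_closed (\<lambda>j. - lam j) A U \<longrightarrow> jointly_optimal A G C a r d U g"
    using g down_closed_lex_pair[of "\<lambda>j. - lam j" A _ "\<lambda>j. - w j"] by blast
  \<comment> \<open>\<open>Pre \<union> P\<close> is an initial segment of the greedy order, and all optima agree on the delay of \<open>Pre\<close>.\<close>
  have "down_closed (\<lambda>j. (- lam j, - w j)) A (Pre \<union> P)"
    by (auto simp: down_closed_def Pre_def P_def less_eq_prod_def)
  hence "jointly_optimal A G C a r d (Pre \<union> P) g" "Pre \<union> P \<subseteq> A"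
    using g unfolding down_closed_def by blast+
  moreover have "admissible_for A G C a r A X" using X by (simp add: LP_optimal_def)
  ultimately have "delay G d (Pre \<union> P) g \<le> delay G d (Pre \<union> P) X"
    unfolding jointly_optimal_def using admissible_for_mono by blast
  moreover have "delay G d Pre X = delay G d Pre g"
    unfolding Pre_def by (rule upper_delay_eq_of_LP_optimal[OF fin lam_pos g_lam X])
  moreover have "finite Pre" "finite P" "Pre \<inter> P = {}"
    using fin by (auto simp: Pre_def P_def)
  ultimately show ?thesis by (simp add: delay_union)
qed

locale proper_market = dual_optimal_prices +
  fixes m :: "'a \<Rightarrow> real"
  assumes lam_pos: "\<forall>i\<in>A. 0 < lam i"
    and extensible: "extensible A G C a r d"
    and proper: "proper A G C a r d m lam p"
begin

definition target_delay :: "'a \<Rightarrow> real" where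
  "target_delay i = (req_value i - m i) / lam i"

lemma pay_eq_budget_iff:
  assumes "LP_optimal A G C a r d lam X" "i \<in> A"
  shows "pay G {i} X p = m i \<longleftrightarrow> agent_delay G d X i = target_delay i"
  using pay_of_LP_optimal[OF assms] lam_pos assms(2) by (auto simp: target_delay_def field_simps)

lemma pay_subset_class:
  assumes X: "LP_optimal A G C a r d lam X" and U: "U \<subseteq> lam_class A lam i0"
  shows "pay G U X p = (\<Sum>j\<in>U. req_value j) - lam i0 * delay G d U X"
proof -
  have "pay G U X p = (\<Sum>j\<in>U. req_value j - lam i0 * agent_delay G d X j)"
    unfolding pay_eq_sum_singleton[of G U]
    using U pay_of_LP_optimal[OF X] by (intro sum.cong) (auto simp: lam_class_def)
  thus ?thesis by (simp add: sum_subtractf sum_distrib_left delay_eq_sum_agent_delay)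
qed

lemma sum_target_delay_subset_class:
  assumes U: "U \<subseteq> lam_class A lam i0"
  shows "(\<Sum>j\<in>U. target_delay j) = ((\<Sum>j\<in>U. req_value j) - budget m U) / lam i0"
proof -
  have "(\<Sum>j\<in>U. target_delay j) = (\<Sum>j\<in>U. (req_value j - m j) / lam i0)"
    using U by (intro sum.cong) (auto simp: target_delay_def lam_class_def)
  thus ?thesis by (simp add: sum_divide_distrib[symmetric] sum_subtractf budget_def)
qed

lemma delay_class_of_LP_optimal:
  assumes X: "LP_optimal A G C a r d lam X" and i0: "i0 \<in> A"
  shows "delay G d (lam_class A lam i0) X = (\<Sum>j\<in>lam_class A lam i0. target_delay j)"
proof -
  have "pay G (lam_class A lam i0) X p = budget m (lam_class A lam i0)"
    using proper X i0 by (auto simp: proper_def cond_BB_def)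
  moreover have "lam i0 \<noteq> 0" using lam_pos i0 by auto
  ultimately show ?thesis
    using pay_subset_class[OF X order.refl] sum_target_delay_subset_class[OF order.refl]
    by (simp add: field_simps)
qed

lemma class_delay_le_target_of_max_delay:
  assumes i0: "i0 \<in> A" and P: "P \<subseteq> lam_class A lam i0"
    and X: "LP_optimal A G C a r d lam X"
    and X_max: "\<forall>Y. LP_optimal A G C a r d lam Y \<longrightarrow>
      delay G d (lam_class A lam i0 - P) Y \<le> delay G d (lam_class A lam i0 - P) X"
  shows "delay G d P X \<le> (\<Sum>j\<in>P. target_delay j)"
proof -
  define S where "S = lam_class A lam i0"
  define T where "T = S - P"
  have sub: "S \<subseteq> A" "T \<subseteq> S" by (auto simp: S_def T_def lam_class_def)
  have fin: "finite S" using sub finite_A finite_subset by auto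
  have "pay G T X p \<le> budget m T"
    using proper i0 X X_max sub(2) unfolding proper_def cond_SC_def S_def T_def by blast
  hence "(\<Sum>j\<in>T. target_delay j) \<le> delay G d T X"
    using pay_subset_class[OF X, of T i0] sum_target_delay_subset_class[of T i0] sub(2) lam_pos i0
    by (simp add: S_def divide_le_eq algebra_simps)
  moreover have "delay G d S X = delay G d P X + delay G d T X"
    and "(\<Sum>j\<in>S. target_delay j) = (\<Sum>j\<in>P. target_delay j) + (\<Sum>j\<in>T. target_delay j)"
    using fin P by (auto simp: S_def T_def delay_eq_sum_agent_delay sum.subset_diff)
  ultimately show ?thesis
    using delay_class_of_LP_optimal[OF X i0] by (simp add: S_def)
qed

lemma class_upper_delay_le:
  fixes w :: "'a \<Rightarrow> real" and c :: real
  assumes g: "\<forall>U. down_closed (\<lambda>j. (- lam j, - w j)) A U \<longrightarrow> jointly_optimal A G C a r d U g"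
    and i0: "i0 \<in> A"
  defines "P \<equiv> {j\<in>lam_class A lam i0. c \<le> w j}"
  shows "delay G d P g \<le> (\<Sum>j\<in>P. target_delay j)"
proof -
  have "lam_class A lam i0 - P \<subseteq> A" by (auto simp: lam_class_def)
  \<comment> \<open>Among the optima, delay the rest of the class as much as possible; then SC applies.\<close>
  then obtain X where X: "LP_optimal A G C a r d lam X" "\<forall>Y. LP_optimal A G C a r d lam Y \<longrightarrow>
      delay G d (lam_class A lam i0 - P) Y \<le> delay G d (lam_class A lam i0 - P) X"
    using LP_optimal_max_delay by blast
  have "P = {j\<in>A. lam j = lam i0 \<and> c \<le> w j}" by (auto simp: P_def lam_class_def)
  hence "delay G d P g \<le> delay G d P X"
    using greedy_delay_le_on_segment[OF finite_A lam_pos g X(1)] by simp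
  also have "\<dots> \<le> (\<Sum>j\<in>P. target_delay j)"
    using class_delay_le_target_of_max_delay[OF i0 _ X] by (auto simp: P_def)
  finally show ?thesis .
qed

lemma greedy_point:
  fixes w :: "'a \<Rightarrow> real"
  shows "\<exists>g. LP_optimal A G C a r d lam g \<and>
    (\<Sum>i\<in>A. w i * agent_delay G d g i) \<le> (\<Sum>i\<in>A. w i * target_delay i)"
proof -
  obtain g where g: "\<forall>U. down_closed (\<lambda>j. (- lam j, - w j)) A U \<longrightarrow> jointly_optimal A G C a r d U g"
    using greedy_allocation[OF finite_A extensible] by blast
  have g_opt: "LP_optimal A G C a r d lam g"
    using LP_optimal_of_upper_optimal[OF finite_A lam_pos] g
      down_closed_lex_pair[of "\<lambda>j. - lam j" A _ "\<lambda>j. - w j"] by blast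
  define u where "u i = target_delay i - agent_delay G d g i" for i
  have class_nonneg: "0 \<le> (\<Sum>i\<in>lam_class A lam i0. w i * u i)" if i0: "i0 \<in> A" for i0
  proof (rule abel_nonneg_sum_zero)
    show "finite (lam_class A lam i0)" using finite_A by (simp add: lam_class_def)
    show "(\<Sum>i\<in>lam_class A lam i0. u i) = 0"
      using delay_class_of_LP_optimal[OF g_opt i0] by (simp add: u_def sum_subtractf delay_eq_sum_agent_delay)
    show "\<forall>i\<in>lam_class A lam i0. 0 \<le> (\<Sum>j\<in>{j\<in>lam_class A lam i0. w i \<le> w j}. u j)"
      using class_upper_delay_le[OF g i0] by (simp add: u_def sum_subtractf delay_eq_sum_agent_delay)
  qed
  have "(\<Sum>i\<in>A. w i * u i) = (\<Sum>v\<in>lam ` A. \<Sum>i\<in>{i\<in>A. lam i = v}. w i * u i)"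
    by (rule sum.image_gen[OF finite_A])
  also have "\<dots> \<ge> 0"
    using class_nonneg by (intro sum_nonneg[of "lam ` A"]) (auto simp: lam_class_def)
  finally show ?thesis using g_opt by (auto simp: u_def algebra_simps sum_subtractf)
qed

theorem budget_balanced_optimum: "\<exists>X. LP_optimal A G C a r d lam X \<and> (\<forall>i\<in>A. pay G {i} X p = m i)"
proof (rule ccontr)
  assume "\<not> ?thesis"
  hence "\<forall>X. LP_optimal A G C a r d lam X \<longrightarrow> (\<exists>i\<in>A. agent_delay G d X i \<noteq> target_delay i)"
    using pay_eq_budget_iff by blast
  then obtain w where "\<forall>X. LP_optimal A G C a r d lam X \<longrightarrow>
      (\<Sum>i\<in>A. w i * target_delay i) < (\<Sum>i\<in>A. w i * agent_delay G d X i)"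
    using LP_optimal_separation by blast
  thus False using greedy_point[of w] by force
qed

end

theorem lemma4p3:
  fixes A :: "'a set" and G :: "'g set" and C :: "'c set"
    and a :: "'a \<Rightarrow> 'g \<Rightarrow> 'c \<Rightarrow> real" and r :: "'a \<Rightarrow> 'c \<Rightarrow> real"
    and d :: "'a \<Rightarrow> 'g \<Rightarrow> real" and m :: "'a \<Rightarrow> real"
    and lam :: "'a \<Rightarrow> real" and p :: "'g \<Rightarrow> real"
  assumes "finite A" and "finite G" and "finite C"
    and "\<forall>i\<in>A. \<forall>k\<in>C. r i k \<ge> 0"
    and "\<forall>i\<in>A. \<forall>j\<in>G. d i j \<ge> 0"
    and "\<forall>i\<in>A. m i > 0"
    and "extensible A G C a r d"
    and "\<forall>i\<in>A. lam i > 0"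
    and "\<forall>j\<in>G. p j \<ge> 0"
    and "proper A G C a r d m lam p"
  shows "\<exists>X. LP_optimal A G C a r d lam X \<and> (\<forall>i\<in>A. pay G {i} X p = m i)"
proof -
  obtain \<alpha> where "DLP_optimal A G C a r d lam \<alpha> p"
    using \<open>proper A G C a r d m lam p\<close> by (auto simp: proper_def)
  then interpret proper_market A G C a r d lam p \<alpha> m
    using assms by unfold_locales auto
  show ?thesis by (rule budget_balanced_optimum)
qed

end
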